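(* Let $\mathfrak H$ be a Hilbert space and $F(\lambda)$, $\lambda\in(\sigma,\tau)\subseteq\mathbb R$, an operator function satisfying the standing assumptions (A1)–(A3) below. Then for every half-open interval $[\xi_1,\xi_2)$ with $[\xi_1,\xi_2]\subset(\sigma,\tau)$, \[ \mathcal N_F(\xi_1,\xi_2)\geqslant \nu_F(\xi_2)-\nu_F(\xi_1). \]
   Context: Standing assumptions on $F$: (A1) for every $\lambda_0\in(\sigma,\tau)$, $F(\lambda_0)$ is a self-adjoint operator in $\mathfrak H$ with compact resolvent; (A2) for every $\lambda_0\in(\sigma,\tau)$ there exist a real $\mu$ and a neighbourhood $\mathcal U(\lambda_0)$ with compact closure in $(\sigma,\tau)$ such that $F(\lambda_1)-\mu\geqslant 0$ for all $\lambda_1\in\mathcal U(\lambda_0)$; (A3) $\lambda\mapsto (F(\lambda)-i)^{-1}$ is continuous on $(\sigma,\tau)$ in the operator norm. A number $\lambda_0\in(\sigma,\tau)$ is an eigenvalue of multiplicity $m$ of $F$ if $0$ is an eigenvalue of multiplicity $m$ of $F(\lambda_0)$. $\mathcal N_F(\xi_1,\xi_2)$ denotes the number of eigenvalues of $F$ in $[\xi_1,\xi_2)$ counted with multiplicity, and $\nu_F(\lambda_0)$ denotes the number of negative eigenvalues of $F(\lambda_0)$ counted with multiplicity. *)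

theory Defs
  imports "HOL-Analysis.Analysis"
begin

class complex_inner = real_normed_vector +
  fixes scaleC :: "complex \<Rightarrow> 'a \<Rightarrow> 'a" (infixr \<open>*\<^sub>C\<close> 75)
    and cinner :: "'a \<Rightarrow> 'a \<Rightarrow> complex"
  assumes scaleC_add_right: "a *\<^sub>C (x + y) = a *\<^sub>C x + a *\<^sub>C y"
    and scaleC_add_left: "(a + b) *\<^sub>C x = a *\<^sub>C x + b *\<^sub>C x"
    and scaleC_scaleC: "a *\<^sub>C (b *\<^sub>C x) = (a * b) *\<^sub>C x"
    and scaleC_one: "1 *\<^sub>C x = x"
    and scaleR_scaleC: "scaleR r x = complex_of_real r *\<^sub>C x"
    and cinner_add_left: "cinner (x + y) z = cinner x z + cinner y z"
    and cinner_scaleC_left: "cinner (a *\<^sub>C x) y = cnj a * cinner x y"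
    and cinner_commute: "cinner x y = cnj (cinner y x)"
    and cinner_ge_zero: "0 \<le> Re (cinner x x)"
    and cinner_eq_zero_iff: "cinner x x = 0 \<longleftrightarrow> x = 0"
    and norm_eq_sqrt_cinner: "norm x = sqrt (Re (cinner x x))"

class chilbert_space = complex_inner + complete_space

text \<open>An operator in \<open>\<HH>\<close> is a pair (domain, action).\<close>
type_synonym 'a op = "'a set \<times> ('a \<Rightarrow> 'a)"

definition csubspace :: "'a::complex_inner set \<Rightarrow> bool" where
  "csubspace S \<longleftrightarrow> 0 \<in> S \<and> (\<forall>x\<in>S. \<forall>y\<in>S. x + y \<in> S) \<and> (\<forall>c. \<forall>x\<in>S. c *\<^sub>C x \<in> S)"

definition linear_op :: "'a::complex_inner op \<Rightarrow> bool" where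
  "linear_op A \<longleftrightarrow> csubspace (fst A) \<and>
     (\<forall>x\<in>fst A. \<forall>y\<in>fst A. snd A (x + y) = snd A x + snd A y) \<and>
     (\<forall>c. \<forall>x\<in>fst A. snd A (c *\<^sub>C x) = c *\<^sub>C snd A x)"

definition adjoint_domain :: "'a::complex_inner op \<Rightarrow> 'a set" where
  "adjoint_domain A = {y. \<exists>z. \<forall>x\<in>fst A. cinner (snd A x) y = cinner x z}"

text \<open>Self-adjoint: densely defined, symmetric, and \<open>dom A* = dom A\<close> (hence \<open>A* = A\<close>).\<close>
definition self_adjoint :: "'a::complex_inner op \<Rightarrow> bool" where
  "self_adjoint A \<longleftrightarrow> linear_op A \<and> closure (fst A) = UNIV \<and>
     (\<forall>x\<in>fst A. \<forall>y\<in>fst A. cinner (snd A x) y = cinner x (snd A y)) \<and>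
     adjoint_domain A = fst A"

definition resolvent_bij :: "'a::complex_inner op \<Rightarrow> complex \<Rightarrow> bool" where
  "resolvent_bij A z \<longleftrightarrow> (\<forall>y. \<exists>!x. x \<in> fst A \<and> snd A x - z *\<^sub>C x = y)"

definition resolvent :: "'a::complex_inner op \<Rightarrow> complex \<Rightarrow> 'a \<Rightarrow> 'a" where
  "resolvent A z = (\<lambda>y. THE x. x \<in> fst A \<and> snd A x - z *\<^sub>C x = y)"

definition compact_op :: "('a::real_normed_vector \<Rightarrow> 'a) \<Rightarrow> bool" where
  "compact_op R \<longleftrightarrow> compact (closure (R ` cball 0 1))"

definition compact_resolvent :: "'a::complex_inner op \<Rightarrow> bool" where
  "compact_resolvent A \<longleftrightarrow> resolvent_bij A \<i> \<and> compact_op (resolvent A \<i>)"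

definition op_ge :: "'a::complex_inner op \<Rightarrow> real \<Rightarrow> bool" where
  "op_ge A \<mu> \<longleftrightarrow> (\<forall>x\<in>fst A. 0 \<le> Re (cinner x (snd A x - complex_of_real \<mu> *\<^sub>C x)))"

definition eigenspace :: "'a::complex_inner op \<Rightarrow> complex \<Rightarrow> 'a set" where
  "eigenspace A \<mu> = {x \<in> fst A. snd A x = \<mu> *\<^sub>C x}"

definition is_eigenvalue :: "'a::complex_inner op \<Rightarrow> complex \<Rightarrow> bool" where
  "is_eigenvalue A \<mu> \<longleftrightarrow> eigenspace A \<mu> \<noteq> {0}"

definition multiplicity_ev :: "'a::complex_inner op \<Rightarrow> complex \<Rightarrow> nat" where
  "multiplicity_ev A \<mu> = vector_space.dim scaleC (eigenspace A \<mu>)"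

definition ointerval :: "ereal \<Rightarrow> ereal \<Rightarrow> real set" where
  "ointerval \<sigma> \<tau> = {l. \<sigma> < ereal l \<and> ereal l < \<tau>}"

definition standing_assumptions ::
  "ereal \<Rightarrow> ereal \<Rightarrow> (real \<Rightarrow> 'a::chilbert_space op) \<Rightarrow> bool" where
  "standing_assumptions \<sigma> \<tau> F \<longleftrightarrow>
     \<comment> \<open>(A1)\<close>
     (\<forall>l0\<in>ointerval \<sigma> \<tau>. self_adjoint (F l0) \<and> compact_resolvent (F l0)) \<and>
     \<comment> \<open>(A2)\<close>
     (\<forall>l0\<in>ointerval \<sigma> \<tau>. \<exists>\<mu>::real. \<exists>U. open U \<and> l0 \<in> U \<and> compact (closure U) \<and>
         closure U \<subseteq> ointerval \<sigma> \<tau> \<and> (\<forall>l1\<in>U. op_ge (F l1) \<mu>)) \<and>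
     \<comment> \<open>(A3)\<close>
     (\<forall>l0\<in>ointerval \<sigma> \<tau>.
        ((\<lambda>l. onorm (\<lambda>x. resolvent (F l) \<i> x - resolvent (F l0) \<i> x)) \<longlongrightarrow> 0)
          (at l0 within ointerval \<sigma> \<tau>))"

text \<open>\<open>l0\<close> is an eigenvalue of \<open>F\<close> iff \<open>0\<close> is an eigenvalue of \<open>F(l0)\<close>,
  with multiplicity that of \<open>0\<close>.\<close>
definition ev_F :: "(real \<Rightarrow> 'a::complex_inner op) \<Rightarrow> real \<Rightarrow> bool" where
  "ev_F F l0 \<longleftrightarrow> is_eigenvalue (F l0) 0"

definition N_F :: "(real \<Rightarrow> 'a::complex_inner op) \<Rightarrow> real \<Rightarrow> real \<Rightarrow> enat" where
  "N_F F \<xi>1 \<xi>2 = (let E = {l\<in>{\<xi>1..<\<xi>2}. ev_F F l} in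
     if finite E then enat (\<Sum>l\<in>E. multiplicity_ev (F l) 0) else \<infinity>)"

text \<open>Number of negative eigenvalues of \<open>F(l0)\<close> with multiplicity
  (finite under the standing assumptions).\<close>
definition nu_F :: "(real \<Rightarrow> 'a::complex_inner op) \<Rightarrow> real \<Rightarrow> nat" where
  "nu_F F l0 = (\<Sum>\<mu>\<in>{\<mu>::real. \<mu> < 0 \<and> is_eigenvalue (F l0) (complex_of_real \<mu>)}.
                   multiplicity_ev (F l0) (complex_of_real \<mu>))"

end

theory Submission
  imports Defs
begin

text \<open>Fix \<open>l0\<close>, a lower bound \<open>\<mu>\<close> of \<open>F\<close> near \<open>l0\<close> given by (A2), and a number
  \<open>a < min \<mu> 0\<close>. Near \<open>l0\<close> the resolvents \<open>R(l) = (F(l) - a)\<^sup>-\<^sup>1\<close> are compact,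
  symmetric and nonnegative, and \<open>t \<mapsto> 1 / (t - a)\<close> maps the negative eigenvalues of
  \<open>F(l)\<close> onto the eigenvalues of \<open>R(l)\<close> above \<open>- 1 / a\<close>, with multiplicities; the
  multiplicity of \<open>0\<close> for \<open>F(l0)\<close> becomes that of \<open>- 1 / a\<close> for \<open>R(l0)\<close>.
  By (A3) and the resolvent identity the form of \<open>R(l)\<close> is a small perturbation of that of
  \<open>R(l0)\<close>, and by a min-max argument the number of eigenvalues above \<open>c\<close> of a compact
  nonnegative operator cannot drop under such a perturbation and can grow at most by the
  multiplicity of \<open>c\<close>. Hence \<open>\<nu>\<^sub>F(l0) \<le> \<nu>\<^sub>F(l) \<le> \<nu>\<^sub>F(l0) + m(l0)\<close> for \<open>l\<close> near
  \<open>l0\<close>, where \<open>m(l0)\<close> is the multiplicity of \<open>l0\<close> as an eigenvalue of \<open>F\<close>: the count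
  \<open>\<nu>\<^sub>F\<close> only jumps up, at eigenvalues of \<open>F\<close> and by at most their multiplicity. A
  connectedness argument on \<open>[\<xi>1, \<xi>2]\<close> turns this into the global bound.\<close>

section \<open>Complex inner product spaces\<close>

interpretation cvs: vector_space "scaleC :: complex \<Rightarrow> 'a::complex_inner \<Rightarrow> 'a"
  by unfold_locales (auto simp: scaleC_add_right scaleC_add_left scaleC_scaleC scaleC_one)

interpretation cvs_pair: vector_space_pair "scaleC :: complex \<Rightarrow> 'a::complex_inner \<Rightarrow> 'a"
  "scaleC :: complex \<Rightarrow> 'a \<Rightarrow> 'a"
  by unfold_locales

abbreviation clinear :: "('a::complex_inner \<Rightarrow> 'a) \<Rightarrow> bool" where
  "clinear f \<equiv> Vector_Spaces.linear scaleC scaleC f"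

lemma cinner_add_right: "cinner x (y + z) = cinner x y + cinner x z"
  by (subst (1 2 3) cinner_commute) (simp add: cinner_add_left)

lemma cinner_scaleC_right: "cinner x (a *\<^sub>C y) = a * cinner x y"
  by (subst (1 2) cinner_commute) (simp add: cinner_scaleC_left)

lemma cinner_zero_left [simp]: "cinner 0 x = 0"
  using cinner_add_left[of 0 0 x] by simp

lemma cinner_zero_right [simp]: "cinner x 0 = 0"
  using cinner_add_right[of x 0 0] by simp

lemma cinner_minus_left: "cinner (- x) y = - cinner x y"
  using cinner_add_left[of x "- x" y] by (simp add: eq_neg_iff_add_eq_0 add.commute)

lemma cinner_minus_right: "cinner x (- y) = - cinner x y"
  using cinner_add_right[of x y "- y"] by (simp add: eq_neg_iff_add_eq_0 add.commute)

lemma cinner_diff_left: "cinner (x - y) z = cinner x z - cinner y z"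
  using cinner_add_left[of x "- y" z] by (simp add: cinner_minus_left)

lemma cinner_diff_right: "cinner x (y - z) = cinner x y - cinner x z"
  using cinner_add_right[of x y "- z"] by (simp add: cinner_minus_right)

lemma cinner_sum_left: "cinner (\<Sum>i\<in>I. f i) y = (\<Sum>i\<in>I. cinner (f i) y)"
  by (induction I rule: infinite_finite_induct) (auto simp: cinner_add_left)

lemma cinner_sum_right: "cinner y (\<Sum>i\<in>I. f i) = (\<Sum>i\<in>I. cinner y (f i))"
  by (induction I rule: infinite_finite_induct) (auto simp: cinner_add_right)

lemma cinner_scaleR_left: "cinner (r *\<^sub>R x) y = complex_of_real r * cinner x y"
  by (simp add: scaleR_scaleC cinner_scaleC_left)

lemma cinner_scaleR_right: "cinner x (r *\<^sub>R y) = complex_of_real r * cinner x y"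
  by (simp add: scaleR_scaleC cinner_scaleC_right)

lemmas cinner_simps = cinner_add_left cinner_add_right cinner_scaleC_left cinner_scaleC_right
  cinner_minus_left cinner_minus_right cinner_diff_left cinner_diff_right
  cinner_scaleR_left cinner_scaleR_right

lemma cinner_self: "cinner x x = complex_of_real ((norm x)\<^sup>2)"
proof -
  have "Im (cinner x x) = 0"
    using cinner_commute[of x x] by (metis cnj.simps(2) neg_equal_zero)
  then show ?thesis
    using cinner_ge_zero[of x] norm_eq_sqrt_cinner[of x] by (simp add: complex_eq_iff)
qed

lemma Re_cinner_self: "Re (cinner x x) = (norm x)\<^sup>2"
  by (simp add: cinner_self)

lemma cnj_mult_self: "cnj z * z = complex_of_real ((cmod z)\<^sup>2)"
  using complex_norm_square[of z] by (simp add: mult.commute)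

lemma scaleC_of_real: "complex_of_real r *\<^sub>C x = r *\<^sub>R x"
  by (simp add: scaleR_scaleC)

lemma subspace_scaleR: "cvs.subspace V \<Longrightarrow> x \<in> V \<Longrightarrow> r *\<^sub>R x \<in> V"
  by (simp add: scaleR_scaleC cvs.subspace_scale)

lemma norm_scaleC: "norm (a *\<^sub>C x) = cmod a * norm x"
proof -
  have "complex_of_real ((norm (a *\<^sub>C x))\<^sup>2) = cinner (a *\<^sub>C x) (a *\<^sub>C x)"
    by (simp add: cinner_self)
  also have "\<dots> = (cnj a * a) * cinner x x"
    by (simp add: cinner_scaleC_left cinner_scaleC_right)
  also have "\<dots> = complex_of_real ((cmod a * norm x)\<^sup>2)"
    by (simp add: cnj_mult_self cinner_self power_mult_distrib)
  finally show ?thesis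
    by (simp add: power2_eq_iff_nonneg del: of_real_power)
qed

lemma norm_sq_diff_projection_on_line:
  assumes "u \<noteq> 0"
  shows "(norm (e - (cinner u e / complex_of_real ((norm u)\<^sup>2)) *\<^sub>C u))\<^sup>2
           = (norm e)\<^sup>2 - (cmod (cinner u e))\<^sup>2 / (norm u)\<^sup>2"
proof -
  define N where "N = (norm u)\<^sup>2"
  have N: "N > 0" using assms by (simp add: N_def)
  define z where "z = cinner u e"
  define t where "t = z / complex_of_real N"
  have "complex_of_real ((norm (e - t *\<^sub>C u))\<^sup>2) = cinner (e - t *\<^sub>C u) (e - t *\<^sub>C u)"
    by (simp add: cinner_self)
  also have "\<dots> = cinner e e - t * cinner e u - cnj t * cinner u e + cnj t * t * cinner u u"
    by (simp add: cinner_simps algebra_simps)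
  also have "\<dots> = cinner e e - (cnj z * z) / complex_of_real N"
    using N cinner_commute[of e u]
    by (simp add: t_def z_def cinner_self N_def field_simps power2_eq_square)
  also have "\<dots> = complex_of_real ((norm e)\<^sup>2 - (cmod z)\<^sup>2 / N)"
    by (simp add: cnj_mult_self cinner_self)
  finally show ?thesis
    unfolding t_def z_def N_def using of_real_eq_iff by blast
qed

lemma cauchy_schwarz: "cmod (cinner x y) \<le> norm x * norm y"
proof (cases "x = 0")
  case False
  have "(cmod (cinner x y))\<^sup>2 / (norm x)\<^sup>2 \<le> (norm y)\<^sup>2"
    using norm_sq_diff_projection_on_line[OF False, of y] by (metis diff_ge_0_iff_ge zero_le_power2)
  then have "(cmod (cinner x y))\<^sup>2 \<le> (norm x * norm y)\<^sup>2"
    using False by (simp add: field_simps power_mult_distrib)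
  then show ?thesis by (rule power2_le_imp_le) simp
qed simp

lemma Re_cinner_le: "Re (cinner x y) \<le> norm x * norm y"
  using cauchy_schwarz[of x y] complex_Re_le_cmod[of "cinner x y"] by linarith

lemma norm_add_sq: "(norm (x + y))\<^sup>2 = (norm x)\<^sup>2 + (norm y)\<^sup>2 + 2 * Re (cinner x y)"
  using cinner_commute[of y x]
  by (simp add: Re_cinner_self[symmetric] cinner_add_left cinner_add_right)

lemma norm_diff_sq: "(norm (x - y))\<^sup>2 = (norm x)\<^sup>2 + (norm y)\<^sup>2 - 2 * Re (cinner x y)"
  using cinner_commute[of y x]
  by (simp add: Re_cinner_self[symmetric] cinner_diff_left cinner_diff_right)

lemma bounded_linear_cinner_right: "bounded_linear (cinner g)"
proof (rule bounded_linear_intro[of _ "norm g"])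
  show "cmod (cinner g x) \<le> norm x * norm g" for x
    using cauchy_schwarz[of g x] by (simp add: mult.commute)
qed (simp_all add: cinner_add_right cinner_scaleR_right scaleR_conv_of_real)

lemma tendsto_cinner_right: "(f \<longlongrightarrow> l) F \<Longrightarrow> ((\<lambda>n. cinner g (f n)) \<longlongrightarrow> cinner g l) F"
  by (rule bounded_linear.tendsto[OF bounded_linear_cinner_right])

definition orth_compl :: "'a::complex_inner set \<Rightarrow> 'a set" where
  "orth_compl G = {x. \<forall>g\<in>G. cinner g x = 0}"

lemma closed_orth_compl: "closed (orth_compl G)"
proof -
  have "orth_compl G = (\<Inter>g\<in>G. cinner g -` {0})"
    unfolding orth_compl_def by auto
  then show ?thesis
   
    by (simp add: closed_INT continuous_closed_vimage linear_continuous_at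
        bounded_linear_cinner_right)
qed

lemma subspace_orth_compl: "cvs.subspace (orth_compl G)"
  unfolding orth_compl_def cvs.subspace_def by (auto simp: cinner_add_right cinner_scaleC_right)

section \<open>Orthonormal sets\<close>

definition orthonormal :: "'a::complex_inner set \<Rightarrow> bool" where
  "orthonormal E \<longleftrightarrow> (\<forall>e\<in>E. norm e = 1) \<and> (\<forall>e\<in>E. \<forall>f\<in>E. e \<noteq> f \<longrightarrow> cinner e f = 0)"

definition proj :: "'a::complex_inner set \<Rightarrow> 'a \<Rightarrow> 'a" where
  "proj E x = (\<Sum>e\<in>E. cinner e x *\<^sub>C e)"

lemma cinner_orthonormal_sum:
  assumes "finite E" "orthonormal E" "w \<in> E"
  shows "cinner w (\<Sum>v\<in>E. u v *\<^sub>C v) = u w"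
proof -
  have "cinner w (\<Sum>v\<in>E. u v *\<^sub>C v) = (\<Sum>v\<in>E. u v * cinner w v)"
    by (simp add: cinner_sum_right cinner_scaleC_right)
  also have "\<dots> = u w * cinner w w + (\<Sum>v\<in>E - {w}. u v * cinner w v)"
    using assms by (simp add: sum.remove)
  also have "(\<Sum>v\<in>E - {w}. u v * cinner w v) = 0"
    using assms unfolding orthonormal_def by (intro sum.neutral) auto
  finally show ?thesis
    using assms unfolding orthonormal_def by (simp add: cinner_self)
qed

lemma orthonormal_independent:
  assumes "finite E" "orthonormal E"
  shows "cvs.independent E"
proof -
  have "\<not> (\<exists>u. (\<exists>v\<in>E. u v \<noteq> 0) \<and> (\<Sum>v\<in>E. u v *\<^sub>C v) = 0)"
    using cinner_orthonormal_sum[OF assms] by (metis cinner_zero_right)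
  then show ?thesis using cvs.dependent_finite[OF assms(1)] by blast
qed

lemma orthonormal_span_eq_proj:
  assumes "finite E" "orthonormal E" "x \<in> cvs.span E"
  shows "x = proj E x"
proof -
  from assms(3) obtain u where x: "x = (\<Sum>v\<in>E. u v *\<^sub>C v)"
    using cvs.span_finite[OF assms(1)] by auto
  then show ?thesis
    unfolding proj_def using cinner_orthonormal_sum[OF assms(1,2)] by (auto intro: sum.cong)
qed

lemma diff_proj_in_orth_compl:
  assumes "finite E" "orthonormal E"
  shows "x - proj E x \<in> orth_compl E"
  using cinner_orthonormal_sum[OF assms, of _ "\<lambda>e. cinner e x"]
  by (simp add: orth_compl_def proj_def cinner_diff_right)

lemma orth_compl_span: "orth_compl (cvs.span E) = orth_compl E"
proof
  show "orth_compl (cvs.span E) \<subseteq> orth_compl E"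
    unfolding orth_compl_def using cvs.span_base by blast
  show "orth_compl E \<subseteq> orth_compl (cvs.span E)"
  proof
    fix x assume x: "x \<in> orth_compl E"
    have "cvs.subspace {y. cinner y x = 0}"
      unfolding cvs.subspace_def by (auto simp: cinner_add_left cinner_scaleC_left)
    moreover have "E \<subseteq> {y. cinner y x = 0}"
      using x unfolding orth_compl_def by blast
    ultimately have "cvs.span E \<subseteq> {y. cinner y x = 0}"
      by (rule cvs.span_minimal[rotated])
    then show "x \<in> orth_compl (cvs.span E)"
      unfolding orth_compl_def by blast
  qed
qed

lemma orth_compl_span_eq:
  "cvs.span E = cvs.span G \<Longrightarrow> orth_compl E = orth_compl G"
  by (metis orth_compl_span)

lemma orth_compl_closure: "orth_compl (closure S) = orth_compl S"
proof
  show "orth_compl (closure S) \<subseteq> orth_compl S"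
    using closure_subset unfolding orth_compl_def by blast
  show "orth_compl S \<subseteq> orth_compl (closure S)"
  proof
    fix v assume "v \<in> orth_compl S"
    then have "S \<subseteq> orth_compl {v}"
      by (auto simp: orth_compl_def cinner_commute[of v])
    then have "closure S \<subseteq> orth_compl {v}"
      using closed_orth_compl by (rule closure_minimal)
    then show "v \<in> orth_compl (closure S)"
      by (auto simp: orth_compl_def cinner_commute[of v])
  qed
qed

lemma proj_in_span: "finite E \<Longrightarrow> proj E x \<in> cvs.span E"
  unfolding proj_def by (intro cvs.span_sum cvs.span_scale cvs.span_base)

lemma clinear_proj: "clinear (proj E)"
  unfolding Vector_Spaces.linear_iff
  by (simp add: cvs.vector_space_axioms proj_def cinner_add_right cinner_scaleC_right
      sum.distrib scaleC_add_left cvs.scale_sum_right scaleC_scaleC)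

lemma gram_schmidt_step:
  assumes fin: "finite E" and on: "orthonormal E" and w: "w \<notin> cvs.span E"
  obtains v where "v \<notin> E" "orthonormal (insert v E)" "cvs.span (insert v E) = cvs.span (insert w E)"
proof
  define u where "u = w - proj E w"
  have u0: "u \<noteq> 0"
    using w proj_in_span[OF fin, of w] unfolding u_def by (metis right_minus_eq)
  define v where "v = complex_of_real (1 / norm u) *\<^sub>C u"
  have nv: "norm v = 1"
    using u0 unfolding v_def by (simp add: norm_scaleC norm_divide)
  have ortv: "cinner e v = 0" "cinner v e = 0" if "e \<in> E" for e
    using diff_proj_in_orth_compl[OF fin on, of w] that cinner_commute[of v e]
    by (simp_all add: orth_compl_def v_def u_def cinner_scaleC_right)
  show "v \<notin> E"
    using ortv(1)[of v] nv by (auto simp: cinner_self)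
  show "orthonormal (insert v E)"
    using on nv ortv unfolding orthonormal_def by auto
  have w_eq: "w = complex_of_real (norm u) *\<^sub>C v + proj E w"
    using u0 unfolding v_def u_def by (simp add: scaleC_scaleC)
  have proj_span: "proj E w \<in> cvs.span (insert x E)" for x
    using cvs.span_mono[of E "insert x E"] proj_in_span[OF fin] by blast
  have "w \<in> cvs.span (insert v E)"
    by (subst w_eq) (intro cvs.span_add cvs.span_scale proj_span cvs.span_base insertI1)
  moreover have "v \<in> cvs.span (insert w E)"
    unfolding v_def u_def by (intro cvs.span_scale cvs.span_diff proj_span cvs.span_base insertI1)
  ultimately show "cvs.span (insert v E) = cvs.span (insert w E)"
    unfolding cvs.span_eq by (auto intro: cvs.span_base)
qed

text \<open>Projecting onto \<open>span E\<close> is injective on \<open>span I\<close>, so independence of \<open>I\<close> survives.\<close>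
lemma independent_card_le_orthonormal:
  assumes fin: "finite E" and on: "orthonormal E" and I: "cvs.independent I"
    and orth: "\<And>x. x \<in> cvs.span I \<Longrightarrow> x \<in> orth_compl E \<Longrightarrow> x = 0"
  shows "finite I" "card I \<le> card E"
proof -
  have inj: "inj_on (proj E) (cvs.span I)"
  proof (rule inj_onI)
    fix x y assume xy: "x \<in> cvs.span I" "y \<in> cvs.span I" "proj E x = proj E y"
    then have "proj E (x - y) = 0"
      using cvs_pair.linear_diff[OF clinear_proj, of E x y] by simp
    then have "x - y \<in> orth_compl E"
      using diff_proj_in_orth_compl[OF fin on, of "x - y"] by simp
    then show "x = y"
      using orth[of "x - y"] cvs.span_diff[OF xy(1,2)] by simp
  qed
  have "cvs.independent (proj E ` I)"
    by (rule cvs_pair.linear_independent_injective_image[OF clinear_proj I inj])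
  moreover have "proj E ` I \<subseteq> cvs.span E"
    using proj_in_span[OF fin] by auto
  ultimately have "finite (proj E ` I)" "card (proj E ` I) \<le> card E"
    using cvs.independent_span_bound[OF fin] by auto
  moreover have "inj_on (proj E) I"
    by (rule inj_on_subset[OF inj cvs.span_superset])
  ultimately show "finite I" "card I \<le> card E"
    using finite_imageD[of "proj E" I] card_image[of "proj E" I] by simp_all
qed

lemma orthonormal_norm_diff:
  assumes "orthonormal F" "x \<in> F" "y \<in> F" "x \<noteq> y"
  shows "norm (x - y) = sqrt 2"
proof -
  have "(norm (x - y))\<^sup>2 = 2"
    using assms unfolding orthonormal_def by (simp add: norm_diff_sq)
  then show ?thesis by (metis norm_ge_zero real_sqrt_unique)
qed

lemma subspace_orthonormal_basis:
  assumes W: "cvs.subspace W"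
    and bnd: "\<And>F. F \<subseteq> W \<Longrightarrow> finite F \<Longrightarrow> orthonormal F \<Longrightarrow> card F \<le> N"
  obtains E where "finite E" "orthonormal E" "E \<subseteq> W" "cvs.span E = W"
proof -
  define Cs where "Cs = {card F | F. F \<subseteq> W \<and> finite F \<and> orthonormal F}"
  have "0 \<in> Cs" unfolding Cs_def orthonormal_def by (intro CollectI exI[of _ "{}"]) auto
  moreover have "Cs \<subseteq> {..N}" using bnd unfolding Cs_def by auto
  then have fC: "finite Cs" by (rule finite_subset) simp
  ultimately have "Max Cs \<in> Cs" using Max_in by blast
  then obtain E where E: "E \<subseteq> W" "finite E" "orthonormal E" "card E = Max Cs"
    unfolding Cs_def by auto
  have "W \<subseteq> cvs.span E"
  proof
    fix w assume w: "w \<in> W"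
    show "w \<in> cvs.span E"
    proof (rule ccontr)
      assume "w \<notin> cvs.span E"
      with E(2,3) obtain v where v: "v \<notin> E" "orthonormal (insert v E)"
          "cvs.span (insert v E) = cvs.span (insert w E)"
        by (rule gram_schmidt_step)
      have "v \<in> cvs.span (insert v E)" by (simp add: cvs.span_base)
      then have "v \<in> cvs.span (insert w E)" using v(3) by simp
      also have "\<dots> \<subseteq> W"
        using W w E(1) by (intro cvs.span_minimal) auto
      finally have "insert v E \<subseteq> W" using E(1) by simp
      then have "card (insert v E) \<in> Cs"
        using v(2) E(2) unfolding Cs_def by (intro CollectI exI[of _ "insert v E"]) simp
      then have "card (insert v E) \<le> Max Cs"
        using fC by (rule Max_ge[rotated])
      then show False using E(2,4) v(1) by simp
    qed
  qed
  moreover have "cvs.span E \<subseteq> W" using W E(1) by (intro cvs.span_minimal)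
  ultimately show ?thesis using E that by blast
qed

text \<open>Finitely many \<open>\<epsilon>/2\<close>-balls cover the image of the unit ball, and each of them contains
  the image of at most one point of the family.\<close>
lemma compact_op_separated_card_bound:
  assumes cB: "compact_op B" and e: "\<epsilon> > 0"
  obtains N where "\<And>F. F \<subseteq> cball 0 1 \<Longrightarrow> (\<forall>x\<in>F. \<forall>y\<in>F. x \<noteq> y \<longrightarrow> \<epsilon> \<le> norm (B x - B y))
            \<Longrightarrow> finite F \<and> card F \<le> N"
proof -
  define K where "K = closure (B ` cball 0 1)"
  have "compact K" using cB unfolding compact_op_def K_def .
  moreover have "K \<subseteq> (\<Union>c\<in>K. ball c (\<epsilon>/2))" using e by auto
  ultimately obtain C where C: "C \<subseteq> K" "finite C" "K \<subseteq> (\<Union>c\<in>C. ball c (\<epsilon>/2))"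
    by (metis compactE_image open_ball)
  have "finite F \<and> card F \<le> card C"
    if F: "F \<subseteq> cball 0 1" and sep: "\<forall>x\<in>F. \<forall>y\<in>F. x \<noteq> y \<longrightarrow> \<epsilon> \<le> norm (B x - B y)" for F
  proof -
    have "\<forall>x\<in>F. \<exists>c\<in>C. B x \<in> ball c (\<epsilon>/2)"
      using F C(3) closure_subset unfolding K_def by blast
    then obtain c where c: "\<And>x. x \<in> F \<Longrightarrow> c x \<in> C \<and> B x \<in> ball (c x) (\<epsilon>/2)" by metis
    have "inj_on c F"
    proof (rule inj_onI, rule ccontr)
      fix x y assume xy: "x \<in> F" "y \<in> F" "c x = c y" "x \<noteq> y"
      have "dist (B x) (B y) < \<epsilon>"
        using c[OF xy(1)] c[OF xy(2)] xy(3) dist_triangle_half_r[of "c x" "B x" \<epsilon> "B y"]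
        by (simp add: dist_commute)
      then show False using sep xy by (force simp: dist_norm)
    qed
    moreover have "c ` F \<subseteq> C" using c by auto
    ultimately show ?thesis
      using C(2) card_inj_on_le[of c F C] finite_imageD[of c F] finite_subset[of "c ` F" C] by blast
  qed
  then show ?thesis using that by blast
qed

section \<open>Compact nonnegative operators\<close>

definition qform :: "('a::complex_inner \<Rightarrow> 'a) \<Rightarrow> 'a \<Rightarrow> real" where
  "qform B x = Re (cinner (B x) x)"

definition real_eigenspace :: "('a::complex_inner \<Rightarrow> 'a) \<Rightarrow> real \<Rightarrow> 'a set" where
  "real_eigenspace B s = {x. B x = s *\<^sub>R x}"

definition eigenvalues_above :: "('a::complex_inner \<Rightarrow> 'a) \<Rightarrow> real \<Rightarrow> real set" where
  "eigenvalues_above B c = {s. c < s \<and> real_eigenspace B s \<noteq> {0}}"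

definition eig_count_above :: "('a::complex_inner \<Rightarrow> 'a) \<Rightarrow> real \<Rightarrow> nat" where
  "eig_count_above B c = (\<Sum>s\<in>eigenvalues_above B c. cvs.dim (real_eigenspace B s))"

lemma qform_diff_le:
  assumes "\<And>y. norm (B1 y - B0 y) \<le> C * norm y"
  shows "\<bar>qform B1 x - qform B0 x\<bar> \<le> C * (norm x)\<^sup>2"
proof -
  have "\<bar>qform B1 x - qform B0 x\<bar> = \<bar>Re (cinner (B1 x - B0 x) x)\<bar>"
    by (simp add: qform_def cinner_diff_left)
  also have "\<dots> \<le> norm (B1 x - B0 x) * norm x"
    using abs_Re_le_cmod cauchy_schwarz order_trans by blast
  also have "\<dots> \<le> C * norm x * norm x" by (intro mult_right_mono assms) simp
  finally show ?thesis by (simp add: power2_eq_square mult_ac)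
qed

text \<open>Expand \<open>0 \<le> qform C (x - C x / L)\<close>.\<close>
lemma pos_symmetric_norm_sq_le_form:
  fixes C :: "'a::complex_inner \<Rightarrow> 'a"
  assumes V: "\<And>x y r. x \<in> V \<Longrightarrow> y \<in> V \<Longrightarrow> x - r *\<^sub>R y \<in> V"
    and CV: "\<And>z. z \<in> V \<Longrightarrow> C z \<in> V"
    and sym: "\<And>z w. cinner (C z) w = cinner z (C w)"
    and lin: "\<And>z w r. C (z - r *\<^sub>R w) = C z - r *\<^sub>R C w"
    and bnd: "\<And>z. norm (C z) \<le> L * norm z" and L: "L > 0"
    and pos: "\<And>z. z \<in> V \<Longrightarrow> 0 \<le> qform C z"
    and x: "x \<in> V"
  shows "(norm (C x))\<^sup>2 \<le> L * qform C x"
proof -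
  define y where "y = C x"
  define t where "t = 1 / L"
  have "Re (cinner (C y) y) \<le> L * (norm y)\<^sup>2"
    using Re_cinner_le[of "C y" y] mult_right_mono[OF bnd[of y], of "norm y"]
    by (simp add: power2_eq_square mult.assoc)
  then have "t * t * Re (cinner (C y) y) \<le> t * t * (L * (norm y)\<^sup>2)"
    by (rule mult_left_mono) simp
  moreover have "0 \<le> qform C (x - t *\<^sub>R y)"
    using pos V x CV unfolding y_def by blast
  moreover have "qform C (x - t *\<^sub>R y) = qform C x - 2 * t * (norm y)\<^sup>2 + t * t * Re (cinner (C y) y)"
    using sym[of y x] sym[of x x] cinner_commute[of y x]
    by (simp add: qform_def lin cinner_simps y_def Re_cinner_self algebra_simps)
  moreover have "t * t * (L * (norm y)\<^sup>2) = (norm y)\<^sup>2 / L" "2 * t * (norm y)\<^sup>2 = 2 * ((norm y)\<^sup>2 / L)"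
    using L by (simp_all add: t_def field_simps power2_eq_square)
  ultimately have "(norm y)\<^sup>2 / L \<le> qform C x"
    by linarith
  then show ?thesis
    using L by (simp add: y_def divide_le_eq mult.commute)
qed

locale compact_pos_op =
  fixes B :: "'a::complex_inner \<Rightarrow> 'a" and K :: real
  assumes clinear_B: "clinear B"
    and norm_B_le: "\<And>x. norm (B x) \<le> K * norm x"
    and B_symmetric: "\<And>x y. cinner (B x) y = cinner x (B y)"
    and qform_nonneg: "\<And>x. 0 \<le> qform B x"
    and compact_B: "compact_op B"
    and K_pos: "K > 0"
begin

lemma B_diff: "B (x - y) = B x - B y"
  by (rule cvs_pair.linear_diff[OF clinear_B])

lemma B_scaleC: "B (a *\<^sub>C x) = a *\<^sub>C B x"
  by (rule cvs_pair.linear_scale[OF clinear_B])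

lemma B_scaleR: "B (r *\<^sub>R x) = r *\<^sub>R B x"
  by (simp add: scaleR_scaleC B_scaleC)

lemma B_sum: "B (\<Sum>i\<in>I. f i) = (\<Sum>i\<in>I. B (f i))"
  by (rule cvs_pair.linear_sum[OF clinear_B])

lemma bounded_linear_B: "bounded_linear B"
  by (rule bounded_linear_intro[of _ K])
     (auto simp: cvs_pair.linear_add[OF clinear_B] B_scaleR norm_B_le mult.commute)

lemma qform_scaleR: "qform B (r *\<^sub>R x) = r\<^sup>2 * qform B x"
  by (simp add: qform_def B_scaleR cinner_scaleR_left cinner_scaleR_right power2_eq_square)

lemma qform_le: "qform B x \<le> K * (norm x)\<^sup>2"
  using Re_cinner_le[of "B x" x] mult_right_mono[OF norm_B_le[of x], of "norm x"]
  by (simp add: qform_def power2_eq_square mult.assoc)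

lemma real_eigenspace_subspace: "cvs.subspace (real_eigenspace B s)"
  unfolding cvs.subspace_def real_eigenspace_def
 
  by (auto simp: cvs_pair.linear_add[OF clinear_B] cvs_pair.linear_0[OF clinear_B] B_scaleC
      scaleR_add_right scaleR_scaleC
      scaleC_scaleC mult.commute scaleC_add_right)

lemma real_eigenspace_orthogonal:
  assumes "x \<in> real_eigenspace B s" "y \<in> real_eigenspace B t" "s \<noteq> t"
  shows "cinner x y = 0"
proof -
  have "complex_of_real s * cinner x y = complex_of_real t * cinner x y"
    using B_symmetric[of x y] assms(1,2) unfolding real_eigenspace_def
    by (simp add: cinner_scaleR_left cinner_scaleR_right)
  then show ?thesis using assms(3) by simp
qed

lemma real_eigenspace_orthonormal_basis:
  assumes s: "s > 0"
  obtains E where "finite E" "orthonormal E" "E \<subseteq> real_eigenspace B s"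
    "cvs.span E = real_eigenspace B s"
proof -
  obtain N where N: "\<And>F. F \<subseteq> cball 0 1 \<Longrightarrow> (\<forall>x\<in>F. \<forall>y\<in>F. x \<noteq> y \<longrightarrow> s \<le> norm (B x - B y))
      \<Longrightarrow> finite F \<and> card F \<le> N"
    using compact_op_separated_card_bound[OF compact_B s] by metis
  show ?thesis
  proof (rule subspace_orthonormal_basis[OF real_eigenspace_subspace[of s]])
    fix F assume F: "F \<subseteq> real_eigenspace B s" "finite F" "orthonormal F"
    show "card F \<le> N"
    proof (rule N[THEN conjunct2])
      show "F \<subseteq> cball 0 1" using F(3) unfolding orthonormal_def by auto
      have "norm (B x - B y) = s * sqrt 2" if "x \<in> F" "y \<in> F" "x \<noteq> y" for x y
      proof -
        have "B x = s *\<^sub>R x" "B y = s *\<^sub>R y"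
          using F(1) that unfolding real_eigenspace_def by auto
        then have "B x - B y = s *\<^sub>R (x - y)" by (simp add: scaleR_diff_right)
        then show ?thesis using orthonormal_norm_diff[OF F(3) that] s by simp
      qed
      then show "\<forall>x\<in>F. \<forall>y\<in>F. x \<noteq> y \<longrightarrow> s \<le> norm (B x - B y)"
        using s by force
    qed
  qed (rule that)
qed

lemma dim_real_eigenspace:
  assumes "finite E" "orthonormal E" "cvs.span E = real_eigenspace B s"
  shows "cvs.dim (real_eigenspace B s) = card E"
proof -
  have "cvs.span (real_eigenspace B s) = cvs.span E"
    using assms(3) real_eigenspace_subspace[of s] by simp
  then show ?thesis by (rule cvs.dim_eq_card[OF HOL.sym orthonormal_independent[OF assms(1,2)]])
qed

lemma real_eigenspace_unit_vector:
  assumes "real_eigenspace B s \<noteq> {0}"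
  obtains u where "u \<in> real_eigenspace B s" "norm u = 1"
proof -
  have "0 \<in> real_eigenspace B s"
    using cvs.subspace_0[OF real_eigenspace_subspace] .
  then obtain x where x: "x \<in> real_eigenspace B s" "x \<noteq> 0"
    using assms by blast
  then have "(1 / norm x) *\<^sub>R x \<in> real_eigenspace B s"
    by (intro subspace_scaleR real_eigenspace_subspace)
  then show ?thesis using that x(2) by simp
qed

text \<open>Unit eigenvectors for distinct eigenvalues \<open>s, t > c\<close> are mapped at distance
  \<open>sqrt (s\<^sup>2 + t\<^sup>2) > c\<close>, so compactness leaves room for finitely many of them only.\<close>
lemma finite_eigenvalues_above:
  assumes c: "c > 0"
  shows "finite (eigenvalues_above B c)"
proof -
  define S where "S = eigenvalues_above B c"
  have "\<exists>u. u \<in> real_eigenspace B s \<and> norm u = 1" if "s \<in> S" for s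
    using that real_eigenspace_unit_vector unfolding S_def eigenvalues_above_def by blast
  then obtain u where u: "\<And>s. s \<in> S \<Longrightarrow> u s \<in> real_eigenspace B s \<and> norm (u s) = 1"
    by (metis (lifting))
  have ortho: "cinner (u s) (u t) = 0" if "s \<in> S" "t \<in> S" "s \<noteq> t" for s t
    using real_eigenspace_orthogonal u that by blast
  have inj: "inj_on u S"
  proof (rule inj_onI, rule ccontr)
    fix s t assume st: "s \<in> S" "t \<in> S" "u s = u t" "s \<noteq> t"
    then have "cinner (u s) (u s) = 0" using ortho[of s t] by simp
    then show False using u[OF st(1)] by (simp add: cinner_eq_zero_iff)
  qed
  have sep: "c \<le> norm (B (u s) - B (u t))" if st: "s \<in> S" "t \<in> S" "s \<noteq> t" for s t
  proof -
    have "(norm (B (u s) - B (u t)))\<^sup>2 = s\<^sup>2 + t\<^sup>2"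
      using u[OF st(1)] u[OF st(2)] ortho[OF st]
     
      by (simp add: real_eigenspace_def norm_diff_sq cinner_scaleR_left cinner_scaleR_right
          power_mult_distrib)
    moreover have "c\<^sup>2 \<le> s\<^sup>2"
      using st(1) c unfolding S_def eigenvalues_above_def by (intro power_mono) auto
    moreover have "0 \<le> t\<^sup>2" by simp
    ultimately have "c\<^sup>2 \<le> (norm (B (u s) - B (u t)))\<^sup>2" by linarith
    then show ?thesis by (rule power2_le_imp_le) simp
  qed
  obtain N where N: "\<And>F. F \<subseteq> cball 0 1 \<Longrightarrow> (\<forall>x\<in>F. \<forall>y\<in>F. x \<noteq> y \<longrightarrow> c \<le> norm (B x - B y))
      \<Longrightarrow> finite F \<and> card F \<le> N"
    using compact_op_separated_card_bound[OF compact_B c] by metis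
  have "finite (u ` S)"
  proof (rule N[THEN conjunct1])
    show "u ` S \<subseteq> cball 0 1" using u by auto
    show "\<forall>x\<in>u ` S. \<forall>y\<in>u ` S. x \<noteq> y \<longrightarrow> c \<le> norm (B x - B y)"
      using sep by (auto simp: image_iff)
  qed
  then show ?thesis using inj finite_imageD unfolding S_def by blast
qed

lemma orthonormal_UN_eigenbases:
  assumes "\<And>s. s \<in> T \<Longrightarrow> orthonormal (f s) \<and> f s \<subseteq> real_eigenspace B s"
  shows "orthonormal (\<Union>s\<in>T. f s)"
    and "\<And>s t. s \<in> T \<Longrightarrow> t \<in> T \<Longrightarrow> s \<noteq> t \<Longrightarrow> f s \<inter> f t = {}"
proof -
  have orth: "cinner e e' = 0" if "s \<in> T" "t \<in> T" "s \<noteq> t" "e \<in> f s" "e' \<in> f t" for s t e e'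
    using assms that real_eigenspace_orthogonal by blast
  show "orthonormal (\<Union>s\<in>T. f s)"
    unfolding orthonormal_def
  proof (intro conjI ballI impI)
    fix e assume "e \<in> (\<Union>s\<in>T. f s)"
    then show "norm e = 1" using assms unfolding orthonormal_def by blast
  next
    fix e e' assume "e \<in> (\<Union>s\<in>T. f s)" "e' \<in> (\<Union>s\<in>T. f s)" "e \<noteq> e'"
    then show "cinner e e' = 0"
      using assms orth unfolding orthonormal_def by (metis UN_E)
  qed
  show "f s \<inter> f t = {}" if "s \<in> T" "t \<in> T" "s \<noteq> t" for s t
  proof -
    have "e = 0" if "e \<in> f s" "e \<in> f t" for e
      using orth[OF \<open>s \<in> T\<close> \<open>t \<in> T\<close> \<open>s \<noteq> t\<close> that] by (simp add: cinner_eq_zero_iff)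
    moreover have "0 \<notin> f s"
      using assms[OF \<open>s \<in> T\<close>] unfolding orthonormal_def by auto
    ultimately show ?thesis by blast
  qed
qed

lemma orthonormal_eigenbasis:
  assumes T: "finite T" "\<And>s. s \<in> T \<Longrightarrow> s > 0"
  obtains E where "finite E" "orthonormal E" "card E = (\<Sum>s\<in>T. cvs.dim (real_eigenspace B s))"
    "cvs.span E = cvs.span (\<Union>s\<in>T. real_eigenspace B s)" "\<forall>e\<in>E. \<exists>s\<in>T. B e = s *\<^sub>R e"
proof -
  have "\<forall>s\<in>T. \<exists>F. finite F \<and> orthonormal F \<and> F \<subseteq> real_eigenspace B s
      \<and> cvs.span F = real_eigenspace B s"
    using real_eigenspace_orthonormal_basis T(2) by metis
  then obtain f where f: "\<And>s. s \<in> T \<Longrightarrow> finite (f s) \<and> orthonormal (f s) \<and> f s \<subseteq> real_eigenspace B s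
      \<and> cvs.span (f s) = real_eigenspace B s"
    by metis
  define E where "E = (\<Union>s\<in>T. f s)"
  note E_orth = orthonormal_UN_eigenbases[of T f]
  show ?thesis
  proof
    show "finite E" unfolding E_def using T(1) f by blast
    show "orthonormal E" unfolding E_def using f E_orth by blast
    have "card E = (\<Sum>s\<in>T. card (f s))"
      unfolding E_def using T(1) f E_orth(2) by (intro card_UN_disjoint) auto
    also have "\<dots> = (\<Sum>s\<in>T. cvs.dim (real_eigenspace B s))"
      using f by (intro sum.cong refl dim_real_eigenspace[symmetric]) auto
    finally show "card E = (\<Sum>s\<in>T. cvs.dim (real_eigenspace B s))" .
    have "cvs.span (f s) \<subseteq> cvs.span E" if "s \<in> T" for s
      unfolding E_def using that by (intro cvs.span_mono) blast
    then have "(\<Union>s\<in>T. real_eigenspace B s) \<subseteq> cvs.span E"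
      using f by blast
    moreover have "E \<subseteq> (\<Union>s\<in>T. real_eigenspace B s)"
      unfolding E_def using f by blast
    ultimately show "cvs.span E = cvs.span (\<Union>s\<in>T. real_eigenspace B s)"
      using cvs.span_mono cvs.span_minimal[OF _ cvs.subspace_span] by (metis subset_antisym)
    show "\<forall>e\<in>E. \<exists>s\<in>T. B e = s *\<^sub>R e"
      unfolding E_def using f unfolding real_eigenspace_def by blast
  qed
qed

lemma qform_ge_on_eigenspan:
  assumes fin: "finite E" and on: "orthonormal E" and ev: "\<forall>e\<in>E. \<exists>s. d \<le> s \<and> B e = s *\<^sub>R e"
    and x: "x \<in> cvs.span E"
  shows "d * (norm x)\<^sup>2 \<le> qform B x"
proof -
  from ev obtain sv where sv: "\<And>e. e \<in> E \<Longrightarrow> d \<le> sv e \<and> B e = sv e *\<^sub>R e" by metis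
  define a where "a e = cinner e x" for e
  have xe: "x = (\<Sum>e\<in>E. a e *\<^sub>C e)"
    using orthonormal_span_eq_proj[OF fin on x] unfolding proj_def a_def .
  have "B x = (\<Sum>e\<in>E. a e *\<^sub>C B e)"
    by (subst xe) (simp add: B_sum B_scaleC)
  also have "\<dots> = (\<Sum>e\<in>E. (a e * complex_of_real (sv e)) *\<^sub>C e)"
    using sv by (intro sum.cong) (simp_all add: scaleR_scaleC scaleC_scaleC)
  finally have "cinner (B x) x = (\<Sum>e\<in>E. cnj (a e * complex_of_real (sv e)) * a e)"
    by (simp add: cinner_sum_left cinner_scaleC_left a_def)
  also have "\<dots> = (\<Sum>e\<in>E. complex_of_real (sv e * (cmod (a e))\<^sup>2))"
    by (intro sum.cong)
       (simp_all add: cnj_mult_self mult.assoc mult.left_commute[of "complex_of_real _"])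
  finally have qx: "qform B x = (\<Sum>e\<in>E. sv e * (cmod (a e))\<^sup>2)"
    by (simp add: qform_def Re_sum)
  have "cinner x x = (\<Sum>e\<in>E. cnj (a e) * a e)"
    by (subst (1) xe) (simp add: cinner_sum_left cinner_scaleC_left a_def)
  then have "(norm x)\<^sup>2 = (\<Sum>e\<in>E. (cmod (a e))\<^sup>2)"
    using Re_cinner_self[of x] by (simp add: cnj_mult_self Re_sum)
  then have "d * (norm x)\<^sup>2 = (\<Sum>e\<in>E. d * (cmod (a e))\<^sup>2)"
    by (simp add: sum_distrib_left)
  also have "\<dots> \<le> (\<Sum>e\<in>E. sv e * (cmod (a e))\<^sup>2)"
    using sv by (intro sum_mono mult_right_mono) auto
  finally show ?thesis using qx by simp
qed

lemma eigenvector_from_approximate: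
  assumes V: "closed V" and xs: "\<And>n. xs n \<in> V" "\<And>n. norm (xs n) = 1"
    and s: "s \<noteq> 0" and lim: "(\<lambda>n. s *\<^sub>R xs n - B (xs n)) \<longlonglongrightarrow> 0"
  obtains x0 where "x0 \<in> V" "norm x0 = 1" "B x0 = s *\<^sub>R x0"
proof -
  have "seq_compact (closure (B ` cball 0 1))"
    using compact_B unfolding compact_op_def by (rule compact_imp_seq_compact)
  moreover have "\<forall>n. B (xs n) \<in> closure (B ` cball 0 1)"
    using xs(2) by (intro allI subsetD[OF closure_subset] imageI) simp
  ultimately obtain y r where r: "strict_mono r" and "((\<lambda>n. B (xs n)) \<circ> r) \<longlonglongrightarrow> y"
    by (metis seq_compactE)
  then have Bxr: "(\<lambda>n. B (xs (r n))) \<longlonglongrightarrow> y" by (simp add: comp_def)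
  have "(\<lambda>n. (s *\<^sub>R xs (r n) - B (xs (r n))) + B (xs (r n))) \<longlonglongrightarrow> 0 + y"
    using LIMSEQ_subseq_LIMSEQ[OF lim r] Bxr by (intro tendsto_add) (simp_all add: comp_def)
  then have "(\<lambda>n. (1 / s) *\<^sub>R (s *\<^sub>R xs (r n))) \<longlonglongrightarrow> (1 / s) *\<^sub>R y"
    by (intro tendsto_scaleR tendsto_const) simp
  then have xr: "(\<lambda>n. xs (r n)) \<longlonglongrightarrow> (1 / s) *\<^sub>R y"
    using s by simp
  show ?thesis
  proof
    show "(1 / s) *\<^sub>R y \<in> V"
      using V xs(1) xr by (rule closed_sequentially)
    show "norm ((1 / s) *\<^sub>R y) = 1"
      using xs(2) by (intro LIMSEQ_unique[OF tendsto_norm[OF xr]]) simp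
    have "(\<lambda>n. B (xs (r n))) \<longlonglongrightarrow> B ((1 / s) *\<^sub>R y)"
      by (rule bounded_linear.tendsto[OF bounded_linear_B xr])
    then have "B ((1 / s) *\<^sub>R y) = y"
      using Bxr by (rule LIMSEQ_unique)
    then show "B ((1 / s) *\<^sub>R y) = s *\<^sub>R ((1 / s) *\<^sub>R y)"
      using s by simp
  qed
qed

lemma qform_sup_on_subspace:
  assumes V: "cvs.subspace V" and x1: "x1 \<in> V" "0 < qform B x1"
  obtains s xs where "s > 0" "\<And>x. x \<in> V \<Longrightarrow> qform B x \<le> s * (norm x)\<^sup>2"
    "\<And>n. xs n \<in> V" "\<And>n. norm (xs n) = 1" "(\<lambda>n. qform B (xs n)) \<longlonglongrightarrow> s"
proof -
  define S where "S = {x\<in>V. norm x = 1}"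
  define s where "s = Sup (qform B ` S)"
  have unit: "(1 / norm x) *\<^sub>R x \<in> S" if "x \<in> V" "x \<noteq> 0" for x
    using that subspace_scaleR[OF V] by (simp add: S_def)
  have "x1 \<noteq> 0" using x1(2) by (auto simp: qform_def)
  then have ne: "qform B ` S \<noteq> {}" using unit[OF x1(1)] by blast
  have "qform B x \<le> K" if "x \<in> S" for x
    using qform_le[of x] that by (simp add: S_def)
  then have bdd: "bdd_above (qform B ` S)" by (intro bdd_aboveI[of _ K]) auto
  have bound: "qform B x \<le> s * (norm x)\<^sup>2" if "x \<in> V" for x
  proof (cases "x = 0")
    case False
    have "qform B ((1 / norm x) *\<^sub>R x) \<le> s"
      unfolding s_def using unit[OF that False] bdd by (intro cSup_upper) auto
    then show ?thesis using False by (simp add: qform_scaleR power_divide divide_le_eq mult.commute)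
  qed (simp add: qform_def)
  have "s > 0"
  proof (rule ccontr)
    assume "\<not> s > 0"
    then have "s * (norm x1)\<^sup>2 \<le> 0" by (simp add: mult_nonpos_nonneg)
    then show False using bound[OF x1(1)] x1(2) by linarith
  qed
  have "s \<in> closure (qform B ` S)"
    unfolding s_def by (rule closure_contains_Sup[OF ne bdd])
  then obtain qs where qs: "\<forall>n. qs n \<in> qform B ` S" "qs \<longlonglongrightarrow> s"
    using closure_sequential by blast
  then have "\<forall>n. \<exists>x. x \<in> S \<and> qs n = qform B x" by blast
  then obtain xs where xs: "\<And>n. xs n \<in> S" "\<And>n. qs n = qform B (xs n)" by metis
  then have "qs = (\<lambda>n. qform B (xs n))" by auto
  then show ?thesis using that[of s xs] \<open>s > 0\<close> bound xs(1) qs(2) by (auto simp: S_def)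
qed

lemma norm_sq_shift_le:
  assumes inv: "\<And>x. x \<in> orth_compl G \<Longrightarrow> B x \<in> orth_compl G" and s: "s > 0"
    and bound: "\<And>x. x \<in> orth_compl G \<Longrightarrow> qform B x \<le> s * (norm x)\<^sup>2"
    and x: "x \<in> orth_compl G"
  shows "(norm (s *\<^sub>R x - B x))\<^sup>2 \<le> (s + K) * (s * (norm x)\<^sup>2 - qform B x)"
proof -
  let ?V = "orth_compl G"
  define C where "C z = s *\<^sub>R z - B z" for z
  have V_diff: "x - r *\<^sub>R y \<in> ?V" if "x \<in> ?V" "y \<in> ?V" for x y r
    using that by (intro cvs.subspace_diff subspace_scaleR subspace_orth_compl)
  have qC: "qform C z = s * (norm z)\<^sup>2 - qform B z" for z
    by (simp add: qform_def C_def cinner_simps Re_cinner_self)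
  have "(norm (C x))\<^sup>2 \<le> (s + K) * qform C x"
  proof (rule pos_symmetric_norm_sq_le_form[OF V_diff _ _ _ _ _ _ x])
    show "C z \<in> ?V" if "z \<in> ?V" for z
      unfolding C_def using that inv[OF that]
      by (intro cvs.subspace_diff subspace_scaleR subspace_orth_compl)
    show "cinner (C z) w = cinner z (C w)" for z w
      by (simp add: C_def cinner_simps B_symmetric)
    show "C (z - r *\<^sub>R w) = C z - r *\<^sub>R C w" for z w r
      by (simp add: C_def B_diff B_scaleR algebra_simps)
    show "norm (C z) \<le> (s + K) * norm z" for z
      using norm_triangle_ineq4[of "s *\<^sub>R z" "B z"] norm_B_le[of z] s
      by (simp add: C_def algebra_simps)
    show "s + K > 0" using s K_pos by simp
    show "0 \<le> qform C z" if "z \<in> ?V" for z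
      using bound[OF that] qC by simp
  qed
  then show ?thesis by (simp add: C_def qC)
qed

text \<open>The supremum \<open>s\<close> of the form on the unit sphere of an invariant subspace \<open>V\<close> is
  attained: \<open>s - B\<close> is nonnegative on \<open>V\<close>, so a maximising sequence satisfies
  \<open>(s - B) x\<^sub>n \<longrightarrow> 0\<close>, and compactness of \<open>B\<close> produces an eigenvector.\<close>
lemma max_qform_is_eigenvalue:
  assumes inv: "\<And>x. x \<in> orth_compl G \<Longrightarrow> B x \<in> orth_compl G"
    and x1: "x1 \<in> orth_compl G" "0 < qform B x1"
  obtains s x0 where "s > 0" "x0 \<in> orth_compl G" "x0 \<noteq> 0" "B x0 = s *\<^sub>R x0"
    "\<And>x. x \<in> orth_compl G \<Longrightarrow> qform B x \<le> s * (norm x)\<^sup>2"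
proof -
  obtain s xs where s: "s > 0" and bound: "\<And>x. x \<in> orth_compl G \<Longrightarrow> qform B x \<le> s * (norm x)\<^sup>2"
    and xs: "\<And>n. xs n \<in> orth_compl G" "\<And>n. norm (xs n) = 1"
    and lim: "(\<lambda>n. qform B (xs n)) \<longlonglongrightarrow> s"
    using qform_sup_on_subspace[OF subspace_orth_compl x1] by metis
  have Clim: "(\<lambda>n. s *\<^sub>R xs n - B (xs n)) \<longlonglongrightarrow> 0"
  proof (rule Lim_null_comparison)
    show "\<forall>\<^sub>F n in sequentially. norm (s *\<^sub>R xs n - B (xs n)) \<le> sqrt ((s + K) * (s - qform B (xs n)))"
      using norm_sq_shift_le[OF inv s bound xs(1)] xs(2) by (simp add: real_le_rsqrt)
    show "(\<lambda>n. sqrt ((s + K) * (s - qform B (xs n)))) \<longlonglongrightarrow> 0"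
      using tendsto_real_sqrt[OF tendsto_mult[OF tendsto_const[of "s + K"]
          tendsto_diff[OF tendsto_const[of s] lim]]]
      by simp
  qed
  have "s \<noteq> 0" using s by simp
  then obtain x0 where "x0 \<in> orth_compl G" "norm x0 = 1" "B x0 = s *\<^sub>R x0"
    using Clim by (rule eigenvector_from_approximate[OF closed_orth_compl xs])
  then show ?thesis
    by (intro that[of s x0] s bound) auto
qed

lemma orth_compl_eigenspaces_invariant:
  assumes "z \<in> orth_compl (\<Union>s\<in>T. real_eigenspace B s)"
  shows "B z \<in> orth_compl (\<Union>s\<in>T. real_eigenspace B s)"
proof -
  have "cinner g (B z) = 0" if "g \<in> real_eigenspace B s" "s \<in> T" for g s
  proof -
    have "cinner g (B z) = complex_of_real s * cinner g z"
      using that(1) B_symmetric[of g z] by (simp add: real_eigenspace_def cinner_scaleR_left)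
    also have "cinner g z = 0"
      using assms that unfolding orth_compl_def by blast
    finally show ?thesis by simp
  qed
  then show ?thesis unfolding orth_compl_def by blast
qed

text \<open>An eigenvector for an eigenvalue in \<open>T\<close> cannot lie in the orthogonal complement
  of the corresponding eigenspaces.\<close>
lemma qform_on_orth_compl_eigenspaces:
  assumes x1: "x1 \<in> orth_compl (\<Union>t\<in>T. real_eigenspace B t)" "0 < qform B x1"
  obtains s where "s \<notin> T" "s > 0" "real_eigenspace B s \<noteq> {0}"
    "\<And>x. x \<in> orth_compl (\<Union>t\<in>T. real_eigenspace B t) \<Longrightarrow> qform B x \<le> s * (norm x)\<^sup>2"
proof -
  obtain s x0 where s: "s > 0" "x0 \<in> orth_compl (\<Union>t\<in>T. real_eigenspace B t)" "x0 \<noteq> 0"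
      "B x0 = s *\<^sub>R x0" "\<And>x. x \<in> orth_compl (\<Union>t\<in>T. real_eigenspace B t) \<Longrightarrow> qform B x \<le> s * (norm x)\<^sup>2"
    using max_qform_is_eigenvalue[OF orth_compl_eigenspaces_invariant x1] by metis
  have x0: "x0 \<in> real_eigenspace B s" using s(4) by (simp add: real_eigenspace_def)
  have "s \<notin> T"
  proof
    assume "s \<in> T"
    then have "cinner x0 x0 = 0" using s(2) x0 unfolding orth_compl_def by blast
    then show False using s(3) by (simp add: cinner_eq_zero_iff)
  qed
  moreover have "real_eigenspace B s \<noteq> {0}" using x0 s(3) by blast
  ultimately show ?thesis using that s by blast
qed

lemma orthonormal_eigenbasis_above:
  assumes c: "c > 0"
  obtains E c' where "finite E" "orthonormal E" "card E = eig_count_above B c"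
    "\<And>x. x \<in> orth_compl E \<Longrightarrow> qform B x \<le> c * (norm x)\<^sup>2"
    "c' > c" "\<And>x. x \<in> cvs.span E \<Longrightarrow> c' * (norm x)\<^sup>2 \<le> qform B x"
proof -
  define T where "T = eigenvalues_above B c"
  have T: "finite T" "\<And>s. s \<in> T \<Longrightarrow> s > 0"
    using finite_eigenvalues_above[OF c] c unfolding T_def eigenvalues_above_def by auto
  obtain E where E: "finite E" "orthonormal E" "card E = (\<Sum>s\<in>T. cvs.dim (real_eigenspace B s))"
     "cvs.span E = cvs.span (\<Union>s\<in>T. real_eigenspace B s)" "\<forall>e\<in>E. \<exists>s\<in>T. B e = s *\<^sub>R e"
    using orthonormal_eigenbasis[OF T] by metis
  have upper: "qform B x \<le> c * (norm x)\<^sup>2" if x: "x \<in> orth_compl E" for x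
  proof (rule ccontr)
    assume *: "\<not> qform B x \<le> c * (norm x)\<^sup>2"
    then have "0 < qform B x" using c by (smt (verit) mult_nonneg_nonneg zero_le_power2)
    moreover have x': "x \<in> orth_compl (\<Union>s\<in>T. real_eigenspace B s)"
      using x orth_compl_span_eq[OF E(4)] by simp
    ultimately obtain s where "s \<notin> T" "s > 0" "real_eigenspace B s \<noteq> {0}"
        "qform B x \<le> s * (norm x)\<^sup>2"
      using qform_on_orth_compl_eigenspaces by metis
    then have "s \<le> c" unfolding T_def eigenvalues_above_def by auto
    then have "s * (norm x)\<^sup>2 \<le> c * (norm x)\<^sup>2" by (simp add: mult_right_mono)
    then show False using * \<open>qform B x \<le> s * (norm x)\<^sup>2\<close> by linarith
  qed
  define c' where "c' = Min (insert (c + 1) T)"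
  have "c' > c" unfolding c'_def using T(1) by (auto simp: T_def eigenvalues_above_def)
  moreover have "c' * (norm x)\<^sup>2 \<le> qform B x" if "x \<in> cvs.span E" for x
  proof (rule qform_ge_on_eigenspan[OF E(1,2) _ that])
    show "\<forall>e\<in>E. \<exists>s. c' \<le> s \<and> B e = s *\<^sub>R e"
      using E(5) T(1) unfolding c'_def by (meson Min_le finite_insert insertCI)
  qed
  ultimately show ?thesis
    using that E(1,2,3) upper unfolding T_def eig_count_above_def by blast
qed

lemma orthonormal_eigenbasis_at_or_above:
  assumes c: "c > 0"
  obtains F c'' where "finite F" "orthonormal F"
    "card F = eig_count_above B c + cvs.dim (real_eigenspace B c)"
    "c'' < c" "\<And>x. x \<in> orth_compl F \<Longrightarrow> qform B x \<le> c'' * (norm x)\<^sup>2"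
proof -
  define T where "T = insert c (eigenvalues_above B c)"
  have T: "finite T" "\<And>s. s \<in> T \<Longrightarrow> s > 0"
    using finite_eigenvalues_above[OF c] c unfolding T_def eigenvalues_above_def by auto
  obtain F where F: "finite F" "orthonormal F" "card F = (\<Sum>s\<in>T. cvs.dim (real_eigenspace B s))"
     "cvs.span F = cvs.span (\<Union>s\<in>T. real_eigenspace B s)"
    using orthonormal_eigenbasis[OF T] by metis
  have card: "card F = eig_count_above B c + cvs.dim (real_eigenspace B c)"
    using F(3) finite_eigenvalues_above[OF c]
    by (simp add: T_def eig_count_above_def eigenvalues_above_def)
  define V where "V = orth_compl (\<Union>s\<in>T. real_eigenspace B s)"
  obtain c'' where c'': "c'' < c" "\<And>x. x \<in> V \<Longrightarrow> qform B x \<le> c'' * (norm x)\<^sup>2"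
  proof (cases "\<exists>x1\<in>V. 0 < qform B x1")
    case True
    then obtain s where "s \<notin> T" "s > 0" "real_eigenspace B s \<noteq> {0}"
        "\<And>x. x \<in> V \<Longrightarrow> qform B x \<le> s * (norm x)\<^sup>2"
      unfolding V_def using qform_on_orth_compl_eigenspaces by metis
    moreover from this have "s < c" unfolding T_def eigenvalues_above_def by auto
    ultimately show ?thesis using that by blast
  next
    case False
    then have "qform B x \<le> c / 2 * (norm x)\<^sup>2" if "x \<in> V" for x
      using that c by (smt (verit) mult_nonneg_nonneg zero_le_power2 half_gt_zero)
    then show ?thesis using that[of "c / 2"] c by simp
  qed
  moreover have "orth_compl F = V"
    unfolding V_def by (rule orth_compl_span_eq[OF F(4)])
  ultimately show ?thesis using that F(1,2) card by blast
qed

end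

lemma card_le_by_qform_gap:
  assumes E: "finite E" "orthonormal E" and F: "finite F" "orthonormal F"
    and upper: "\<And>x. x \<in> orth_compl F \<Longrightarrow> q1 x \<le> c * (norm x)\<^sup>2"
    and lower: "\<And>x. x \<in> cvs.span E \<Longrightarrow> c0 * (norm x)\<^sup>2 \<le> q0 x"
    and close: "\<And>x. \<bar>q1 x - q0 x\<bar> \<le> \<delta> * (norm x)\<^sup>2" and gap: "\<delta> < c0 - c"
  shows "card E \<le> card F"
proof (rule independent_card_le_orthonormal(2)[OF F orthonormal_independent[OF E]])
  fix x assume x: "x \<in> cvs.span E" "x \<in> orth_compl F"
  show "x = 0"
  proof (rule ccontr)
    assume "x \<noteq> 0"
    then have "(c + \<delta>) * (norm x)\<^sup>2 < c0 * (norm x)\<^sup>2" using gap by simp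
    moreover have "q0 x \<le> q1 x + \<delta> * (norm x)\<^sup>2" using close[of x] by linarith
    ultimately show False
      using upper[OF x(2)] lower[OF x(1)] by (simp add: algebra_simps)
  qed
qed

text \<open>A min-max argument: on the span of the eigenvectors of \<open>B0\<close> for eigenvalues \<open>> c\<close>
  the form of \<open>B1\<close> still exceeds \<open>c\<close>, and orthogonally to those for eigenvalues
  \<open>\<ge> c\<close> it stays below \<open>c\<close>.\<close>
lemma eig_count_above_perturbation:
  assumes B0: "compact_pos_op B0 K0" and c: "c > 0"
  obtains \<delta> where "\<delta> > 0" "\<And>B1 K1. compact_pos_op B1 K1 \<Longrightarrow>
     (\<And>x. \<bar>qform B1 x - qform B0 x\<bar> \<le> \<delta> * (norm x)\<^sup>2) \<Longrightarrow>
     eig_count_above B0 c \<le> eig_count_above B1 c \<and>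
     eig_count_above B1 c \<le> eig_count_above B0 c + cvs.dim (real_eigenspace B0 c)"
proof -
  interpret b0: compact_pos_op B0 K0 by (rule B0)
  obtain E0 c0 where E0: "finite E0" "orthonormal E0" "card E0 = eig_count_above B0 c"
     "c0 > c" "\<And>x. x \<in> cvs.span E0 \<Longrightarrow> c0 * (norm x)\<^sup>2 \<le> qform B0 x"
    using b0.orthonormal_eigenbasis_above[OF c] by metis
  obtain F0 c1 where F0: "finite F0" "orthonormal F0"
     "card F0 = eig_count_above B0 c + cvs.dim (real_eigenspace B0 c)"
     "c1 < c" "\<And>x. x \<in> orth_compl F0 \<Longrightarrow> qform B0 x \<le> c1 * (norm x)\<^sup>2"
    using b0.orthonormal_eigenbasis_at_or_above[OF c] by metis
  define \<delta> where "\<delta> = min (c0 - c) (c - c1) / 2"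
  show ?thesis
  proof
    show "\<delta> > 0" unfolding \<delta>_def using E0(4) F0(4) by simp
    fix B1 K1 assume "compact_pos_op B1 K1"
      and close: "\<And>x. \<bar>qform B1 x - qform B0 x\<bar> \<le> \<delta> * (norm x)\<^sup>2"
    then interpret b1: compact_pos_op B1 K1 by simp
    obtain E1 c2 where E1: "finite E1" "orthonormal E1" "card E1 = eig_count_above B1 c"
       "\<And>x. x \<in> orth_compl E1 \<Longrightarrow> qform B1 x \<le> c * (norm x)\<^sup>2"
       "c2 > c" "\<And>x. x \<in> cvs.span E1 \<Longrightarrow> c2 * (norm x)\<^sup>2 \<le> qform B1 x"
      using b1.orthonormal_eigenbasis_above[OF c] by metis
    have close': "\<bar>qform B0 x - qform B1 x\<bar> \<le> \<delta> * (norm x)\<^sup>2" for x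
      using close[of x] by linarith
    have gap: "\<delta> < c0 - c" "\<delta> < c2 - c1"
      using E0(4) F0(4) E1(5) unfolding \<delta>_def by auto
    have "card E0 \<le> card E1"
      by (rule card_le_by_qform_gap[OF E0(1,2) E1(1,2) E1(4) E0(5) close gap(1)])
    moreover have "card E1 \<le> card F0"
      by (rule card_le_by_qform_gap[OF E1(1,2) F0(1,2) F0(5) E1(6) close' gap(2)])
    ultimately show "eig_count_above B0 c \<le> eig_count_above B1 c \<and>
        eig_count_above B1 c \<le> eig_count_above B0 c + cvs.dim (real_eigenspace B0 c)"
      using E0(3) E1(3) F0(3) by simp
  qed
qed

section \<open>Orthogonal projections in Hilbert spaces\<close>

lemma parallelogram_near_minimum:
  fixes y a b :: "'a::complex_inner"
  assumes mid: "d \<le> norm (y - (1/2) *\<^sub>R (a + b))" and d: "0 \<le> d"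
    and a: "(norm (y - a))\<^sup>2 \<le> d\<^sup>2 + e1" and b: "(norm (y - b))\<^sup>2 \<le> d\<^sup>2 + e2"
  shows "(norm (a - b))\<^sup>2 \<le> 2 * e1 + 2 * e2"
proof -
  have "(norm ((y - a) + (y - b)))\<^sup>2 + (norm ((y - a) - (y - b)))\<^sup>2
      = 2 * (norm (y - a))\<^sup>2 + 2 * (norm (y - b))\<^sup>2"
    using norm_add_sq[of "y - a" "y - b"] norm_diff_sq[of "y - a" "y - b"] by simp
  moreover have "(y - a) + (y - b) = 2 *\<^sub>R (y - (1/2) *\<^sub>R (a + b))"
    by (simp add: algebra_simps scaleR_2)
  moreover have "(y - a) - (y - b) = - (a - b)"
    by simp
  moreover have "(2 * d)\<^sup>2 \<le> (norm (2 *\<^sub>R (y - (1/2) *\<^sub>R (a + b))))\<^sup>2"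
    using mid d by (intro power_mono) auto
  ultimately show ?thesis
    using a b by (simp only: norm_minus_cancel power_mult_distrib) simp
qed

lemma near_infdist_sq:
  assumes "W \<noteq> {}" "e > 0"
  obtains w where "w \<in> W" "(norm (y - w))\<^sup>2 < (infdist y W)\<^sup>2 + e"
proof -
  have "infdist y W < sqrt ((infdist y W)\<^sup>2 + e)"
    using infdist_nonneg[of y W] assms(2)
      real_sqrt_less_mono[of "(infdist y W)\<^sup>2" "(infdist y W)\<^sup>2 + e"]
    by simp
  then obtain w where w: "w \<in> W" "norm (y - w) < sqrt ((infdist y W)\<^sup>2 + e)"
    using cInf_less_iff[OF _ bdd_below_image_dist, of y W] assms(1)
    by (auto simp: infdist_notempty dist_norm)
  then have "(norm (y - w))\<^sup>2 < (sqrt ((infdist y W)\<^sup>2 + e))\<^sup>2"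
    by (intro power_strict_mono) auto
  then show ?thesis using that w(1) assms(2) by simp
qed

lemma Cauchy_if_norm_sq_diff_le:
  assumes "\<And>m n. (norm (ws m - ws n))\<^sup>2 \<le> 2 * inverse (real (Suc m)) + 2 * inverse (real (Suc n))"
  shows "Cauchy ws"
proof (rule CauchyI)
  fix e :: real assume e: "e > 0"
  obtain M where M: "inverse (real (Suc M)) < e\<^sup>2 / 4"
    using reals_Archimedean[of "e\<^sup>2 / 4"] e by auto
  have "norm (ws m - ws n) < e" if "M \<le> m" "M \<le> n" for m n
  proof -
    have "inverse (real (Suc m)) \<le> inverse (real (Suc M))"
      "inverse (real (Suc n)) \<le> inverse (real (Suc M))"
      using that by (auto intro!: le_imp_inverse_le)
    then have "(norm (ws m - ws n))\<^sup>2 < e\<^sup>2"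
      using assms[of m n] M by linarith
    then show ?thesis using e by (simp add: power_less_imp_less_base)
  qed
  then show "\<exists>M. \<forall>m\<ge>M. \<forall>n\<ge>M. norm (ws m - ws n) < e" by blast
qed

lemma closed_subspace_nearest_point:
  fixes W :: "'a::chilbert_space set"
  assumes closed: "closed W" and W: "cvs.subspace W"
  obtains w where "w \<in> W" "\<And>u. u \<in> W \<Longrightarrow> norm (y - w) \<le> norm (y - u)"
proof -
  define d where "d = infdist y W"
  define ep where "ep n = inverse (real (Suc n))" for n
  have W_ne: "W \<noteq> {}" using cvs.subspace_0[OF W] by blast
  have d: "0 \<le> d" "\<And>u. u \<in> W \<Longrightarrow> d \<le> norm (y - u)"
    using infdist_le[of _ W y] by (simp_all add: d_def infdist_nonneg dist_norm)
  have "\<exists>w\<in>W. (norm (y - w))\<^sup>2 < d\<^sup>2 + ep n" for n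
    using near_infdist_sq[OF W_ne, of "ep n" y] unfolding d_def ep_def by auto
  then obtain ws where ws: "\<And>n. ws n \<in> W" "\<And>n. (norm (y - ws n))\<^sup>2 < d\<^sup>2 + ep n"
    by metis
  have "(norm (ws m - ws n))\<^sup>2 \<le> 2 * ep m + 2 * ep n" for m n
  proof (rule parallelogram_near_minimum[OF d(2) d(1)])
    show "(1/2) *\<^sub>R (ws m + ws n) \<in> W"
      using ws(1) W by (intro subspace_scaleR cvs.subspace_add) auto
  qed (use ws(2) less_imp_le in auto)
  then have "Cauchy ws"
    unfolding ep_def by (rule Cauchy_if_norm_sq_diff_le)
  then obtain w where w: "ws \<longlonglongrightarrow> w"
    using Cauchy_convergent convergent_def by blast
  show ?thesis
  proof
    show "w \<in> W" using closed ws(1) w by (rule closed_sequentially)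
    have "norm (y - w) \<le> d"
    proof (rule LIMSEQ_le)
      show "(\<lambda>n. norm (y - ws n)) \<longlonglongrightarrow> norm (y - w)" by (intro tendsto_intros w)
      show "(\<lambda>n. sqrt (d\<^sup>2 + ep n)) \<longlonglongrightarrow> d"
        using tendsto_real_sqrt[OF tendsto_add[OF tendsto_const[of "d\<^sup>2"]
            LIMSEQ_inverse_real_of_nat]] d(1)
        by (simp add: ep_def)
      show "\<exists>N. \<forall>n\<ge>N. norm (y - ws n) \<le> sqrt (d\<^sup>2 + ep n)"
        using ws(2) by (intro exI[of _ 0] allI impI real_le_rsqrt) (simp add: less_imp_le)
    qed
    then show "norm (y - w) \<le> norm (y - u)" if "u \<in> W" for u
      using d(2)[OF that] by linarith
  qed
qed

lemma nearest_point_orth_compl: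
  assumes W: "cvs.subspace W" and w: "w \<in> W" and near: "\<And>u. u \<in> W \<Longrightarrow> norm (y - w) \<le> norm (y - u)"
  shows "y - w \<in> orth_compl W"
  unfolding orth_compl_def
proof (intro CollectI ballI)
  fix u assume u: "u \<in> W"
  show "cinner u (y - w) = 0"
  proof (cases "u = 0")
    case False
    define t where "t = cinner u (y - w) / complex_of_real ((norm u)\<^sup>2)"
    have "w + t *\<^sub>C u \<in> W" using W w u by (intro cvs.subspace_add cvs.subspace_scale)
    then have "(norm (y - w))\<^sup>2 \<le> (norm ((y - w) - t *\<^sub>C u))\<^sup>2"
      using near by (intro power_mono) (auto simp: algebra_simps)
    also have "\<dots> = (norm (y - w))\<^sup>2 - (cmod (cinner u (y - w)))\<^sup>2 / (norm u)\<^sup>2"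
      unfolding t_def by (rule norm_sq_diff_projection_on_line[OF False])
    finally show ?thesis using False by (simp add: divide_le_0_iff)
  qed simp
qed

lemma orthogonal_projection_exists:
  fixes W :: "'a::chilbert_space set"
  assumes "closed W" "cvs.subspace W"
  obtains w where "w \<in> W" "y - w \<in> orth_compl W"
  using closed_subspace_nearest_point[OF assms] nearest_point_orth_compl[OF assms(2)] by metis

section \<open>Semibounded self-adjoint operators with compact resolvent\<close>

lemma resolvent_mem:
  assumes "resolvent_bij A z"
  shows "resolvent A z y \<in> fst A" "snd A (resolvent A z y) - z *\<^sub>C resolvent A z y = y"
  using theI'[of "\<lambda>x. x \<in> fst A \<and> snd A x - z *\<^sub>C x = y"] assms
  unfolding resolvent_bij_def resolvent_def by auto

lemma resolvent_unique:
  assumes "resolvent_bij A z" "x \<in> fst A" "snd A x - z *\<^sub>C x = y"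
  shows "resolvent A z y = x"
  using assms unfolding resolvent_bij_def resolvent_def by (blast intro: the1_equality)

locale lin_op =
  fixes A :: "'a::complex_inner op"
  assumes linear_op: "linear_op A"
begin

lemma dom_zero: "0 \<in> fst A"
  and dom_add: "x \<in> fst A \<Longrightarrow> y \<in> fst A \<Longrightarrow> x + y \<in> fst A"
  and dom_scaleC: "x \<in> fst A \<Longrightarrow> c *\<^sub>C x \<in> fst A"
  and op_add: "x \<in> fst A \<Longrightarrow> y \<in> fst A \<Longrightarrow> snd A (x + y) = snd A x + snd A y"
  and op_scaleC: "x \<in> fst A \<Longrightarrow> snd A (c *\<^sub>C x) = c *\<^sub>C snd A x"
  using linear_op unfolding linear_op_def csubspace_def by auto

lemma op_zero: "snd A 0 = 0"
  using op_scaleC[OF dom_zero, of 0] by simp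

lemma dom_scaleR: "x \<in> fst A \<Longrightarrow> r *\<^sub>R x \<in> fst A"
  by (simp add: scaleR_scaleC dom_scaleC)

lemma op_scaleR: "x \<in> fst A \<Longrightarrow> snd A (r *\<^sub>R x) = r *\<^sub>R snd A x"
  by (simp add: scaleR_scaleC op_scaleC)

lemma dom_diff: "x \<in> fst A \<Longrightarrow> y \<in> fst A \<Longrightarrow> x - y \<in> fst A"
  using dom_add[of x "(- 1) *\<^sub>R y"] dom_scaleR[of y "- 1"] by simp

lemma op_diff: "x \<in> fst A \<Longrightarrow> y \<in> fst A \<Longrightarrow> snd A (x - y) = snd A x - snd A y"
  using op_add[of x "(- 1) *\<^sub>R y"] dom_scaleR[of y "- 1"] op_scaleR[of y "- 1"] by simp

lemma clinear_resolvent: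
  assumes bij: "resolvent_bij A z"
  shows "clinear (resolvent A z)"
  unfolding Vector_Spaces.linear_iff
proof (intro conjI allI cvs.vector_space_axioms)
  note R = resolvent_mem[OF bij]
  show "resolvent A z (y1 + y2) = resolvent A z y1 + resolvent A z y2" for y1 y2
    using R[of y1] R[of y2] op_add[OF R(1) R(1)]
    by (intro resolvent_unique[OF bij] dom_add) (auto simp: scaleC_add_right algebra_simps)
  show "resolvent A z (c *\<^sub>C y) = c *\<^sub>C resolvent A z y" for c y
  proof (rule resolvent_unique[OF bij dom_scaleC[OF R(1)]])
    have "c *\<^sub>C (snd A (resolvent A z y) - z *\<^sub>C resolvent A z y) = c *\<^sub>C y"
      using R(2)[of y] by simp
    then show "snd A (c *\<^sub>C resolvent A z y) - z *\<^sub>C c *\<^sub>C resolvent A z y = c *\<^sub>C y"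
      using op_scaleC[OF R(1)]
      by (simp add: cvs.scale_right_diff_distrib scaleC_scaleC mult.commute)
  qed
qed

end

locale semibounded_sa =
  fixes A :: "'a::chilbert_space op" and \<mu> a :: real
  assumes self_adjoint: "self_adjoint A" and compact_resolvent: "compact_resolvent A"
    and lower_bound: "op_ge A \<mu>" and below_bound: "a < \<mu>"

sublocale semibounded_sa \<subseteq> lin_op
  using self_adjoint by unfold_locales (simp add: self_adjoint_def)

context semibounded_sa
begin

lemma symmetric: "x \<in> fst A \<Longrightarrow> y \<in> fst A \<Longrightarrow> cinner (snd A x) y = cinner x (snd A y)"
  and adjoint_domain_eq: "adjoint_domain A = fst A"
  and dense_domain: "closure (fst A) = UNIV"
  using self_adjoint unfolding self_adjoint_def by blast+

lemma coercive: "x \<in> fst A \<Longrightarrow> (\<mu> - a) * (norm x)\<^sup>2 \<le> Re (cinner x (snd A x - a *\<^sub>R x))"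
proof -
  assume x: "x \<in> fst A"
  have "0 \<le> Re (cinner x (snd A x - complex_of_real \<mu> *\<^sub>C x))"
    using lower_bound x unfolding op_ge_def by blast
  moreover have "cinner x (snd A x - a *\<^sub>R x)
      = cinner x (snd A x - complex_of_real \<mu> *\<^sub>C x) + complex_of_real (\<mu> - a) * cinner x x"
    by (simp add: cinner_simps algebra_simps)
  ultimately show ?thesis by (simp add: Re_cinner_self)
qed

lemma coercive_norm: "x \<in> fst A \<Longrightarrow> (\<mu> - a) * norm x \<le> norm (snd A x - a *\<^sub>R x)"
proof -
  assume x: "x \<in> fst A"
  have "(\<mu> - a) * (norm x)\<^sup>2 \<le> norm x * norm (snd A x - a *\<^sub>R x)"
    using coercive[OF x] Re_cinner_le[of x "snd A x - a *\<^sub>R x"] by linarith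
  then show ?thesis
    by (cases "x = 0") (auto simp: power2_eq_square mult.commute mult.left_commute)
qed

lemma shift_injective:
  assumes "x \<in> fst A" "snd A x - a *\<^sub>R x = 0"
  shows "x = 0"
  using coercive_norm[OF assms(1)] assms(2) below_bound by (simp add: mult_le_0_iff)

lemma orth_compl_domain: "orth_compl (fst A) = {0}"
proof -
  have "x = 0" if "x \<in> orth_compl UNIV" for x
    using that cinner_eq_zero_iff[of x] unfolding orth_compl_def by blast
  then show ?thesis
    using orth_compl_closure[of "fst A"] dense_domain by (auto simp: orth_compl_def)
qed

lemma graph_closed:
  assumes xs: "\<And>n. xs n \<in> fst A" and x: "xs \<longlonglongrightarrow> x" and w: "(\<lambda>n. snd A (xs n)) \<longlonglongrightarrow> w"
  shows "x \<in> fst A" "snd A x = w"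
proof -
  have eq: "cinner (snd A z) x = cinner z w" if z: "z \<in> fst A" for z
  proof -
    have "(\<lambda>n. cinner (snd A z) (xs n)) \<longlonglongrightarrow> cinner (snd A z) x"
      by (rule tendsto_cinner_right[OF x])
    moreover have "(\<lambda>n. cinner (snd A z) (xs n)) \<longlonglongrightarrow> cinner z w"
      using tendsto_cinner_right[OF w, of z] symmetric[OF z xs] by simp
    ultimately show ?thesis by (rule LIMSEQ_unique)
  qed
  then have "x \<in> adjoint_domain A" unfolding adjoint_domain_def by blast
  then show x_dom: "x \<in> fst A" using adjoint_domain_eq by simp
  have "snd A x - w \<in> orth_compl (fst A)"
    using eq symmetric[OF _ x_dom] by (simp add: orth_compl_def cinner_diff_right)
  then show "snd A x = w" using orth_compl_domain by simp
qed

definition shift_range :: "'a set" where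
  "shift_range = (\<lambda>x. snd A x - a *\<^sub>R x) ` fst A"

lemma shift_diff:
  "x \<in> fst A \<Longrightarrow> y \<in> fst A \<Longrightarrow> snd A (x - y) - a *\<^sub>R (x - y) = (snd A x - a *\<^sub>R x) - (snd A y - a *\<^sub>R y)"
  by (simp add: op_diff scaleR_diff_right)

lemma subspace_shift_range: "cvs.subspace shift_range"
  unfolding cvs.subspace_def shift_range_def
proof (intro conjI ballI allI)
  show "0 \<in> (\<lambda>x. snd A x - a *\<^sub>R x) ` fst A"
    using dom_zero op_zero by force
next
  fix u v assume "u \<in> (\<lambda>x. snd A x - a *\<^sub>R x) ` fst A" "v \<in> (\<lambda>x. snd A x - a *\<^sub>R x) ` fst A"
  then obtain x y where "x \<in> fst A" "y \<in> fst A" "u = snd A x - a *\<^sub>R x" "v = snd A y - a *\<^sub>R y"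
    by blast
  then show "u + v \<in> (\<lambda>x. snd A x - a *\<^sub>R x) ` fst A"
    by (intro image_eqI[of _ _ "x + y"] dom_add) (simp_all add: op_add scaleR_add_right)
next
  fix c u assume "u \<in> (\<lambda>x. snd A x - a *\<^sub>R x) ` fst A"
  then obtain x where "x \<in> fst A" "u = snd A x - a *\<^sub>R x"
    by blast
  then show "c *\<^sub>C u \<in> (\<lambda>x. snd A x - a *\<^sub>R x) ` fst A"
    by (intro image_eqI[of _ _ "c *\<^sub>C x"] dom_scaleC)
       (simp_all add: op_scaleC scaleR_scaleC scaleC_scaleC mult.commute
         cvs.scale_right_diff_distrib)
qed

lemma Cauchy_if_shift_Cauchy:
  assumes xs: "\<And>n. xs n \<in> fst A" and Cauchy: "Cauchy (\<lambda>n. snd A (xs n) - a *\<^sub>R xs n)"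
  shows "Cauchy xs"
proof (rule CauchyI)
  fix e :: real assume "e > 0"
  then obtain M where M: "\<And>m n. m \<ge> M \<Longrightarrow> n \<ge> M \<Longrightarrow>
      norm ((snd A (xs m) - a *\<^sub>R xs m) - (snd A (xs n) - a *\<^sub>R xs n)) < e * (\<mu> - a)"
    using Cauchy below_bound unfolding Cauchy_iff by (metis diff_gt_0_iff_gt mult_pos_pos)
  have "norm (xs m - xs n) < e" if "m \<ge> M" "n \<ge> M" for m n
  proof -
    have "(\<mu> - a) * norm (xs m - xs n)
        \<le> norm ((snd A (xs m) - a *\<^sub>R xs m) - (snd A (xs n) - a *\<^sub>R xs n))"
      using coercive_norm[OF dom_diff[OF xs xs]] shift_diff[OF xs xs] by simp
    then have "(\<mu> - a) * norm (xs m - xs n) < (\<mu> - a) * e"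
      using M[OF that] by (simp add: mult.commute)
    then show ?thesis using below_bound by simp
  qed
  then show "\<exists>M. \<forall>m\<ge>M. \<forall>n\<ge>M. norm (xs m - xs n) < e" by blast
qed

lemma closed_shift_range: "closed shift_range"
  unfolding closed_sequential_limits
proof (intro allI impI)
  fix ys y assume H: "(\<forall>n. ys n \<in> shift_range) \<and> ys \<longlonglongrightarrow> y"
  have "\<exists>x. x \<in> fst A \<and> snd A x - a *\<^sub>R x = ys n" for n
  proof -
    have "ys n \<in> shift_range" using H by blast
    then obtain x where "ys n = snd A x - a *\<^sub>R x" "x \<in> fst A"
      unfolding shift_range_def by (rule imageE)
    then show ?thesis by auto
  qed
  then obtain xs where xs: "\<And>n. xs n \<in> fst A" "\<And>n. snd A (xs n) - a *\<^sub>R xs n = ys n"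
    by metis
  have "Cauchy (\<lambda>n. snd A (xs n) - a *\<^sub>R xs n)"
    using H[THEN conjunct2] xs(2) by (simp add: LIMSEQ_imp_Cauchy)
  then have "Cauchy xs" by (rule Cauchy_if_shift_Cauchy[OF xs(1)])
  then obtain x where x: "xs \<longlonglongrightarrow> x"
    using Cauchy_convergent convergent_def by blast
  have "(\<lambda>n. ys n + a *\<^sub>R xs n) \<longlonglongrightarrow> y + a *\<^sub>R x"
    using H x by (intro tendsto_intros) auto
  then have "(\<lambda>n. snd A (xs n)) \<longlonglongrightarrow> y + a *\<^sub>R x"
    using xs(2) by (simp add: algebra_simps)
  then have "x \<in> fst A" "snd A x = y + a *\<^sub>R x"
    using graph_closed[OF xs(1) x] by auto
  then show "y \<in> shift_range" unfolding shift_range_def by force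
qed

text \<open>A vector \<open>v\<close> orthogonal to the range of \<open>A - a\<close> lies in \<open>dom A\<^sup>* = dom A\<close> and
  satisfies \<open>A v = a v\<close>, which is impossible below the lower bound unless \<open>v = 0\<close>.\<close>
lemma shift_range_eq_UNIV: "shift_range = UNIV"
proof -
  have "y \<in> shift_range" for y
  proof -
    obtain w where w: "w \<in> shift_range" "y - w \<in> orth_compl shift_range"
      using orthogonal_projection_exists[OF closed_shift_range subspace_shift_range] by blast
    define v where "v = y - w"
    have orth: "cinner (snd A x) v = cinner x (a *\<^sub>R v)" if "x \<in> fst A" for x
      using w(2) that unfolding orth_compl_def shift_range_def v_def
      by (auto simp: cinner_diff_left cinner_scaleR_left cinner_scaleR_right)
    then have "v \<in> adjoint_domain A" unfolding adjoint_domain_def by blast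
    then have v: "v \<in> fst A" using adjoint_domain_eq by simp
    have "snd A v - a *\<^sub>R v \<in> orth_compl (fst A)"
      using orth symmetric[OF _ v] unfolding orth_compl_def
      by (auto simp: cinner_diff_right cinner_scaleR_left cinner_scaleR_right)
    then have "v = 0" using shift_injective[OF v] orth_compl_domain by simp
    then show ?thesis using w(1) by (simp add: v_def)
  qed
  then show ?thesis by blast
qed

lemma resolvent_bij_below: "resolvent_bij A (complex_of_real a)"
  unfolding resolvent_bij_def
proof
  fix y
  have "y \<in> shift_range" using shift_range_eq_UNIV by simp
  then obtain x where x: "y = snd A x - a *\<^sub>R x" "x \<in> fst A"
    unfolding shift_range_def by (rule imageE)
  show "\<exists>!x. x \<in> fst A \<and> snd A x - complex_of_real a *\<^sub>C x = y"
  proof (rule ex1I[of _ x])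
    show "x \<in> fst A \<and> snd A x - complex_of_real a *\<^sub>C x = y"
      using x by (simp add: scaleC_of_real)
    show "x' = x" if "x' \<in> fst A \<and> snd A x' - complex_of_real a *\<^sub>C x' = y" for x'
      using shift_injective[OF dom_diff[of x' x]] shift_diff[of x' x] that x(2)
      by (simp add: x(1) scaleC_of_real)
  qed
qed

definition R :: "'a \<Rightarrow> 'a" where
  "R = resolvent A (complex_of_real a)"

lemma R_mem: "R y \<in> fst A"
  and R_eq: "snd A (R y) - a *\<^sub>R R y = y"
  using resolvent_mem[OF resolvent_bij_below, of y] unfolding R_def by (auto simp: scaleC_of_real)

lemma R_unique: "x \<in> fst A \<Longrightarrow> snd A x - a *\<^sub>R x = y \<Longrightarrow> R y = x"
  unfolding R_def by (rule resolvent_unique[OF resolvent_bij_below]) (auto simp: scaleC_of_real)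

lemma clinear_R: "clinear R"
  unfolding R_def by (rule clinear_resolvent[OF resolvent_bij_below])

lemma R_scaleR: "R (r *\<^sub>R x) = r *\<^sub>R R x"
  using cvs_pair.linear_scale[OF clinear_R] by (simp add: scaleR_scaleC)

lemma norm_R_le: "norm (R y) \<le> (1 / (\<mu> - a)) * norm y"
  using coercive_norm[OF R_mem[of y]] R_eq[of y] below_bound by (simp add: field_simps)

lemma R_symmetric: "cinner (R x) y = cinner x (R y)"
proof -
  have "cinner (R x) y = cinner (R x) (snd A (R y) - a *\<^sub>R R y)" using R_eq[of y] by simp
  also have "\<dots> = cinner (snd A (R x) - a *\<^sub>R R x) (R y)"
    using symmetric[OF R_mem R_mem] by (simp add: cinner_simps)
  also have "\<dots> = cinner x (R y)" using R_eq[of x] by simp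
  finally show ?thesis .
qed

lemma qform_R_nonneg: "0 \<le> qform R x"
proof -
  have "(\<mu> - a) * (norm (R x))\<^sup>2 \<le> qform R x"
    using coercive[OF R_mem[of x]] R_eq[of x] by (simp add: qform_def)
  moreover have "0 \<le> (\<mu> - a) * (norm (R x))\<^sup>2" using below_bound by simp
  ultimately show ?thesis by linarith
qed

lemma resolvent_bij_i: "resolvent_bij A \<i>"
  and compact_op_resolvent_i: "compact_op (resolvent A \<i>)"
  using compact_resolvent unfolding compact_resolvent_def by blast+

lemma clinear_resolvent_i: "clinear (resolvent A \<i>)"
  by (rule clinear_resolvent[OF resolvent_bij_i])

lemma resolvent_i_R: "resolvent A \<i> (y + (complex_of_real a - \<i>) *\<^sub>C R y) = R y"
proof (rule resolvent_unique[OF resolvent_bij_i R_mem])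
  show "snd A (R y) - \<i> *\<^sub>C R y = y + (complex_of_real a - \<i>) *\<^sub>C R y"
    using R_eq[of y] by (simp add: cvs.scale_left_diff_distrib scaleC_of_real algebra_simps)
qed

lemma R_resolvent_i: "R y = resolvent A \<i> y + (complex_of_real a - \<i>) *\<^sub>C R (resolvent A \<i> y)"
proof -
  define v where "v = resolvent A \<i> y"
  have v: "v \<in> fst A" "snd A v - \<i> *\<^sub>C v = y"
    using resolvent_mem[OF resolvent_bij_i] unfolding v_def by auto
  have "snd A v - a *\<^sub>R v = y + (\<i> - complex_of_real a) *\<^sub>C v"
    using v(2) by (simp add: cvs.scale_left_diff_distrib scaleC_of_real algebra_simps)
  then have "v = R (y + (\<i> - complex_of_real a) *\<^sub>C v)"
    by (rule R_unique[OF v(1), symmetric])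
  also have "\<dots> = R y + (\<i> - complex_of_real a) *\<^sub>C R v"
    using cvs_pair.linear_add[OF clinear_R] cvs_pair.linear_scale[OF clinear_R] by simp
  finally show ?thesis
    unfolding v_def[symmetric] by (simp add: cvs.scale_left_diff_distrib algebra_simps)
qed

lemma norm_shift_R_le:
  "norm (w + (complex_of_real a - \<i>) *\<^sub>C R w)
     \<le> (1 + cmod (complex_of_real a - \<i>) / (\<mu> - a)) * norm w"
proof -
  have "norm (w + (complex_of_real a - \<i>) *\<^sub>C R w)
      \<le> norm w + cmod (complex_of_real a - \<i>) * norm (R w)"
    using norm_triangle_ineq by (metis norm_scaleC)
  also have "\<dots> \<le> norm w + cmod (complex_of_real a - \<i>) * ((1 / (\<mu> - a)) * norm w)"
    by (intro add_left_mono mult_left_mono norm_R_le) simp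
  finally show ?thesis by (simp add: algebra_simps)
qed

text \<open>By the resolvent identity \<open>R\<close> maps the unit ball into \<open>M\<close> times the image of the unit
  ball under the compact resolvent at \<open>\<i>\<close>.\<close>
lemma compact_op_R: "compact_op R"
  unfolding compact_op_def
proof -
  define M where "M = 1 + cmod (complex_of_real a - \<i>) / (\<mu> - a)"
  have M: "M > 0" unfolding M_def using below_bound by (simp add: add_pos_nonneg)
  define C where "C = (\<lambda>x. M *\<^sub>R x) ` closure (resolvent A \<i> ` cball 0 1)"
  have "compact C"
    unfolding C_def using compact_op_resolvent_i unfolding compact_op_def by (rule compact_scaling)
  have "R y \<in> C" if y: "norm y \<le> 1" for y
  proof -
    define S where "S = y + (complex_of_real a - \<i>) *\<^sub>C R y"
    have "norm S \<le> M * norm y"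
      unfolding S_def M_def by (rule norm_shift_R_le)
    also have "\<dots> \<le> M"
      using y M by (simp add: mult_left_le)
    finally have "(1 / M) *\<^sub>R S \<in> cball 0 1" using M by (simp add: divide_le_eq)
    then have "resolvent A \<i> ((1 / M) *\<^sub>R S) \<in> closure (resolvent A \<i> ` cball 0 1)"
      by (intro subsetD[OF closure_subset] imageI)
    moreover have "resolvent A \<i> ((1 / M) *\<^sub>R S) = (1 / M) *\<^sub>R R y"
      using cvs_pair.linear_scale[OF clinear_resolvent_i] resolvent_i_R
      by (simp add: S_def scaleR_scaleC)
    then have "R y = M *\<^sub>R resolvent A \<i> ((1 / M) *\<^sub>R S)"
      using M by simp
    ultimately show ?thesis unfolding C_def by blast
  qed
  then have "closure (R ` cball 0 1) \<subseteq> C"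
    using compact_imp_closed[OF \<open>compact C\<close>] by (intro closure_minimal) auto
  then show "compact (closure (R ` cball 0 1))"
    using \<open>compact C\<close> by (metis closed_closure compact_Int_closed inf.absorb_iff2)
qed

lemma compact_pos_op_R: "compact_pos_op R (1 / (\<mu> - a))"
  using below_bound
  by (intro compact_pos_op.intro clinear_R norm_R_le R_symmetric qform_R_nonneg compact_op_R) simp

lemma eigenspace_eq_real_eigenspace_R:
  assumes t: "t > a"
  shows "eigenspace A (complex_of_real t) = real_eigenspace R (1 / (t - a))"
proof
  show "eigenspace A (complex_of_real t) \<subseteq> real_eigenspace R (1 / (t - a))"
  proof
    fix x assume "x \<in> eigenspace A (complex_of_real t)"
    then have x: "x \<in> fst A" "snd A x - a *\<^sub>R x = (t - a) *\<^sub>R x"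
      unfolding eigenspace_def by (auto simp: scaleC_of_real scaleR_diff_left)
    have "(t - a) *\<^sub>R R x = R ((t - a) *\<^sub>R x)" by (simp add: R_scaleR)
    also have "\<dots> = x" by (rule R_unique[OF x])
    finally have Rx: "(t - a) *\<^sub>R R x = x" .
    have "R x = (1 / (t - a)) *\<^sub>R ((t - a) *\<^sub>R R x)"
      using t by simp
    then show "x \<in> real_eigenspace R (1 / (t - a))"
      unfolding Rx real_eigenspace_def by simp
  qed
  show "real_eigenspace R (1 / (t - a)) \<subseteq> eigenspace A (complex_of_real t)"
  proof
    fix x assume "x \<in> real_eigenspace R (1 / (t - a))"
    then have x: "x = (t - a) *\<^sub>R R x"
      using t unfolding real_eigenspace_def by simp
    then have "x \<in> fst A" using dom_scaleR[OF R_mem] by metis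
    moreover have "snd A x = t *\<^sub>R x"
    proof -
      have "snd A x = (t - a) *\<^sub>R (x + a *\<^sub>R R x)"
        using op_scaleR[OF R_mem] R_eq[of x] x by (metis diff_add_cancel)
      also have "\<dots> = (t - a) *\<^sub>R x + a *\<^sub>R ((t - a) *\<^sub>R R x)"
        by (simp add: algebra_simps)
      also have "\<dots> = t *\<^sub>R x"
        unfolding x[symmetric] by (simp flip: scaleR_add_left)
      finally show ?thesis .
    qed
    ultimately show "x \<in> eigenspace A (complex_of_real t)"
      unfolding eigenspace_def by (simp add: scaleC_of_real)
  qed
qed

lemma eigenvalue_ge_lower_bound:
  assumes "is_eigenvalue A (complex_of_real t)"
  shows "\<mu> \<le> t"
proof -
  obtain x where x: "x \<in> fst A" "snd A x = t *\<^sub>R x" "x \<noteq> 0"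
    using assms dom_zero op_zero unfolding is_eigenvalue_def eigenspace_def
    by (auto simp: scaleC_of_real)
  have "0 \<le> Re (cinner x (snd A x - complex_of_real \<mu> *\<^sub>C x))"
    using lower_bound x(1) unfolding op_ge_def by blast
  also have "\<dots> = (t - \<mu>) * (norm x)\<^sup>2"
    using x(2) by (simp add: scaleC_of_real cinner_simps Re_cinner_self algebra_simps)
  finally show ?thesis using x(3) by (simp add: zero_le_mult_iff)
qed

lemma multiplicity_zero_eq:
  assumes "a < 0"
  shows "multiplicity_ev A 0 = cvs.dim (real_eigenspace R (- 1 / a))"
  using eigenspace_eq_real_eigenspace_R[of 0] assms unfolding multiplicity_ev_def by simp

lemma eigenvalues_above_R:
  assumes a: "a < 0"
  shows "eigenvalues_above R (- 1 / a)
    = (\<lambda>t. 1 / (t - a)) ` {t. t < 0 \<and> is_eigenvalue A (complex_of_real t)}"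
proof -
  have "1 / (t - a) \<in> eigenvalues_above R (- 1 / a)"
    if "t < 0" "is_eigenvalue A (complex_of_real t)" for t
  proof -
    have "a < t" using eigenvalue_ge_lower_bound[OF that(2)] below_bound by simp
    then have "1 / (- a) < 1 / (t - a)"
      using that(1) a by (intro divide_strict_left_mono) (auto simp: mult_neg_pos)
    then show ?thesis
      using that(2) eigenspace_eq_real_eigenspace_R[OF \<open>a < t\<close>]
      by (simp add: eigenvalues_above_def is_eigenvalue_def)
  qed
  moreover have "s \<in> (\<lambda>t. 1 / (t - a)) ` {t. t < 0 \<and> is_eigenvalue A (complex_of_real t)}"
    if "s \<in> eigenvalues_above R (- 1 / a)" for s
  proof -
    have s: "- 1 / a < s" "real_eigenspace R s \<noteq> {0}"
      using that unfolding eigenvalues_above_def by auto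
    then have "s > 0" using a by (smt (verit) divide_neg_neg)
    define t where "t = a + 1 / s"
    have "a < t" "s = 1 / (t - a)" using \<open>s > 0\<close> by (simp_all add: t_def)
    moreover have "t < 0"
      using s(1) a \<open>s > 0\<close> by (simp add: t_def field_simps)
    ultimately show ?thesis
      using s(2) eigenspace_eq_real_eigenspace_R unfolding is_eigenvalue_def by auto
  qed
  ultimately show ?thesis by blast
qed

lemma negative_eigenvalue_count:
  assumes a: "a < 0"
  shows "(\<Sum>t\<in>{t. t < 0 \<and> is_eigenvalue A (complex_of_real t)}.
      multiplicity_ev A (complex_of_real t))
     = eig_count_above R (- 1 / a)"
proof -
  let ?T = "{t. t < 0 \<and> is_eigenvalue A (complex_of_real t)}"
  have "a < t" if "t \<in> ?T" for t
    using that eigenvalue_ge_lower_bound below_bound by force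
  moreover have "inj_on (\<lambda>t. 1 / (t - a)) ?T"
    by (rule inj_onI) simp
  ultimately show ?thesis
    unfolding eig_count_above_def eigenvalues_above_R[OF a]
    by (simp add: sum.reindex multiplicity_ev_def eigenspace_eq_real_eigenspace_R)
qed

lemma norm_resolvent_i_le: "norm (resolvent A \<i> y) \<le> norm y"
proof -
  define v where "v = resolvent A \<i> y"
  have v: "v \<in> fst A" "y = snd A v - \<i> *\<^sub>C v"
    using resolvent_mem[OF resolvent_bij_i] unfolding v_def by auto
  have "Im (cinner (snd A v) v) = 0"
    using symmetric[OF v(1) v(1)] cinner_commute[of v "snd A v"]
    by (metis cnj.simps(2) neg_equal_zero)
  then have "(norm y)\<^sup>2 = (norm (snd A v))\<^sup>2 + (norm v)\<^sup>2"
    unfolding v(2) norm_diff_sq by (simp add: norm_scaleC cinner_scaleC_right)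
  then have "(norm v)\<^sup>2 \<le> (norm y)\<^sup>2" by simp
  then show ?thesis unfolding v_def by (rule power2_le_imp_le) simp
qed

lemma bounded_linear_resolvent_i: "bounded_linear (resolvent A \<i>)"
  by (rule bounded_linear_intro[of _ 1])
     (simp_all add: cvs_pair.linear_add[OF clinear_resolvent_i] scaleR_scaleC
       cvs_pair.linear_scale[OF clinear_resolvent_i] norm_resolvent_i_le)

end

section \<open>The operator function near a point\<close>

lemma multiplicity_ev_not_eigenvalue: "\<not> is_eigenvalue A \<mu> \<Longrightarrow> multiplicity_ev A \<mu> = 0"
  using cvs.dim_eq_card[of "{}" "{0}"] cvs.independent_empty
  unfolding is_eigenvalue_def multiplicity_ev_def by (simp add: cvs.subspace_0)

text \<open>With \<open>S\<^sub>j w = w + (a - \<i>) R\<^sub>j w\<close> the resolvent identities give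
  \<open>R\<^sub>1 y - R\<^sub>0 y = S\<^sub>1 ((A\<^sub>1 - \<i>)\<^sup>-\<^sup>1 - (A\<^sub>0 - \<i>)\<^sup>-\<^sup>1) S\<^sub>0 y\<close>.\<close>
lemma norm_R_diff_le:
  assumes S0: "semibounded_sa A0 \<mu> a" and S1: "semibounded_sa A1 \<mu> a"
  defines "M \<equiv> 1 + cmod (complex_of_real a - \<i>) / (\<mu> - a)"
  shows "norm (semibounded_sa.R A1 a y - semibounded_sa.R A0 a y)
           \<le> M * M * onorm (\<lambda>x. resolvent A1 \<i> x - resolvent A0 \<i> x) * norm y"
proof -
  interpret s0: semibounded_sa A0 \<mu> a by (rule S0)
  interpret s1: semibounded_sa A1 \<mu> a by (rule S1)
  define k where "k = complex_of_real a - \<i>"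
  define u where "u = y + k *\<^sub>C s0.R y"
  let ?D = "\<lambda>x. resolvent A1 \<i> x - resolvent A0 \<i> x"
  have M: "0 \<le> M" unfolding M_def using s0.below_bound by simp
  have D: "bounded_linear ?D"
    by (rule bounded_linear_sub[OF s1.bounded_linear_resolvent_i s0.bounded_linear_resolvent_i])
  have lin1: "s1.R (p + k *\<^sub>C q) = s1.R p + k *\<^sub>C s1.R q" for p q
    using cvs_pair.linear_add[OF s1.clinear_R] cvs_pair.linear_scale[OF s1.clinear_R] by simp
  have "s1.R y - s0.R y = s1.R u - (s0.R y + k *\<^sub>C s1.R (s0.R y))"
    unfolding u_def lin1 by simp
  also have "\<dots> = ?D u + k *\<^sub>C s1.R (?D u)"
  proof -
    have e1: "s1.R u = resolvent A1 \<i> u + k *\<^sub>C s1.R (resolvent A1 \<i> u)"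
      using s1.R_resolvent_i unfolding k_def .
    have e2: "resolvent A0 \<i> u = s0.R y"
      using s0.resolvent_i_R unfolding u_def k_def .
    have e3: "s1.R (?D u) = s1.R (resolvent A1 \<i> u) - s1.R (resolvent A0 \<i> u)"
      by (rule cvs_pair.linear_diff[OF s1.clinear_R])
    show ?thesis
      unfolding e3 unfolding e2 e1 by (simp add: cvs.scale_right_diff_distrib algebra_simps)
  qed
  also have "norm \<dots> \<le> M * norm (?D u)"
    using s1.norm_shift_R_le unfolding M_def k_def .
  also have "\<dots> \<le> M * (onorm ?D * norm u)"
    using onorm[OF D] M by (intro mult_left_mono) auto
  also have "\<dots> \<le> M * (onorm ?D * (M * norm y))"
    using s0.norm_shift_R_le[of y] M onorm_pos_le[OF D]
    unfolding u_def M_def k_def by (intro mult_left_mono) auto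
  finally show ?thesis by (simp add: mult_ac)
qed

lemma qform_R_diff_le:
  assumes S0: "semibounded_sa A0 \<mu> a" and S1: "semibounded_sa A1 \<mu> a"
    and close: "onorm (\<lambda>x. resolvent A1 \<i> x - resolvent A0 \<i> x) \<le> e"
  shows "\<bar>qform (semibounded_sa.R A1 a) x - qform (semibounded_sa.R A0 a) x\<bar>
           \<le> (1 + cmod (complex_of_real a - \<i>) / (\<mu> - a))\<^sup>2 * e * (norm x)\<^sup>2"
proof -
  let ?M = "1 + cmod (complex_of_real a - \<i>) / (\<mu> - a)"
  have "0 \<le> ?M" using semibounded_sa.below_bound[OF S0] by simp
  have "norm (semibounded_sa.R A1 a y - semibounded_sa.R A0 a y) \<le> ?M\<^sup>2 * e * norm y" for y
  proof -
    have "?M * ?M * onorm (\<lambda>x. resolvent A1 \<i> x - resolvent A0 \<i> x) * norm y \<le> ?M * ?M * e * norm y"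
      using close \<open>0 \<le> ?M\<close> by (intro mult_right_mono mult_left_mono) auto
    then show ?thesis
      using norm_R_diff_le[OF S0 S1, of y] by (simp add: power2_eq_square)
  qed
  then show ?thesis by (rule qform_diff_le)
qed

lemma standing_assumptions_semibounded:
  assumes SA: "standing_assumptions \<sigma> \<tau> F" and l0: "l0 \<in> ointerval \<sigma> \<tau>"
  obtains \<mu> U where "open U" "l0 \<in> U" "U \<subseteq> ointerval \<sigma> \<tau>"
    "\<And>l a. l \<in> U \<Longrightarrow> a < \<mu> \<Longrightarrow> semibounded_sa (F l) \<mu> a"
proof -
  obtain \<mu> U where U: "open U" "l0 \<in> U" "closure U \<subseteq> ointerval \<sigma> \<tau>" "\<forall>l\<in>U. op_ge (F l) \<mu>"
    using SA l0 unfolding standing_assumptions_def by blast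
  moreover have "U \<subseteq> ointerval \<sigma> \<tau>" using U(3) closure_subset by blast
  moreover have "\<forall>l\<in>ointerval \<sigma> \<tau>. self_adjoint (F l) \<and> compact_resolvent (F l)"
    using SA unfolding standing_assumptions_def by blast
  ultimately show ?thesis
    using that[of U \<mu>] by (meson semibounded_sa.intro subsetD)
qed

lemma standing_assumptions_resolvent_close:
  assumes SA: "standing_assumptions \<sigma> \<tau> F" and l0: "l0 \<in> ointerval \<sigma> \<tau>" and e: "e > 0"
  obtains d where "d > 0" "\<And>l. l \<in> ointerval \<sigma> \<tau> \<Longrightarrow> \<bar>l - l0\<bar> < d \<Longrightarrow>
     onorm (\<lambda>x. resolvent (F l) \<i> x - resolvent (F l0) \<i> x) \<le> e"
proof -
  have "((\<lambda>l. onorm (\<lambda>x. resolvent (F l) \<i> x - resolvent (F l0) \<i> x)) \<longlongrightarrow> 0)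
      (at l0 within ointerval \<sigma> \<tau>)"
    using SA l0 unfolding standing_assumptions_def by blast
  then obtain d where d: "d > 0" "\<And>l. l \<in> ointerval \<sigma> \<tau> \<Longrightarrow> l \<noteq> l0 \<Longrightarrow> dist l l0 < d \<Longrightarrow>
      dist (onorm (\<lambda>x. resolvent (F l) \<i> x - resolvent (F l0) \<i> x)) 0 < e"
    using e unfolding tendsto_iff eventually_at by blast
  show ?thesis
  proof (rule that[OF d(1)])
    fix l assume "l \<in> ointerval \<sigma> \<tau>" "\<bar>l - l0\<bar> < d"
    then show "onorm (\<lambda>x. resolvent (F l) \<i> x - resolvent (F l0) \<i> x) \<le> e"
      using d(2)[of l] e by (cases "l = l0") (auto simp: dist_real_def onorm_zero)
  qed
qed

lemma nu_F_local_bounds: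
  assumes SA: "standing_assumptions \<sigma> \<tau> F" and l0: "l0 \<in> ointerval \<sigma> \<tau>"
  obtains d where "d > 0" "\<And>l. l \<in> ointerval \<sigma> \<tau> \<Longrightarrow> \<bar>l - l0\<bar> < d \<Longrightarrow>
     nu_F F l0 \<le> nu_F F l \<and> nu_F F l \<le> nu_F F l0 + multiplicity_ev (F l0) 0"
proof -
  obtain \<mu> U where U: "open U" "l0 \<in> U" "U \<subseteq> ointerval \<sigma> \<tau>"
      and sa: "\<And>l a. l \<in> U \<Longrightarrow> a < \<mu> \<Longrightarrow> semibounded_sa (F l) \<mu> a"
    using standing_assumptions_semibounded[OF SA l0] by metis
  define a where "a = min \<mu> 0 - 1"
  have a: "a < \<mu>" "a < 0" unfolding a_def by auto
  interpret s0: semibounded_sa "F l0" \<mu> a by (rule sa[OF U(2) a(1)])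
  have nu: "nu_F F l = eig_count_above (semibounded_sa.R (F l) a) (- 1 / a)" if "l \<in> U" for l
    unfolding nu_F_def using semibounded_sa.negative_eigenvalue_count[OF sa[OF that a(1)] a(2)] .
  obtain \<delta> where \<delta>: "\<delta> > 0" and perturb: "\<And>B1 K1. compact_pos_op B1 K1 \<Longrightarrow>
      (\<And>x. \<bar>qform B1 x - qform s0.R x\<bar> \<le> \<delta> * (norm x)\<^sup>2) \<Longrightarrow>
      eig_count_above s0.R (- 1 / a) \<le> eig_count_above B1 (- 1 / a) \<and>
      eig_count_above B1 (- 1 / a)
        \<le> eig_count_above s0.R (- 1 / a) + cvs.dim (real_eigenspace s0.R (- 1 / a))"
    using eig_count_above_perturbation[OF s0.compact_pos_op_R, of "- 1 / a"] a(2)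
    by (auto simp: divide_neg_neg)
  define M where "M = (1 + cmod (complex_of_real a - \<i>) / (\<mu> - a))\<^sup>2"
  have "0 < 1 + cmod (complex_of_real a - \<i>) / (\<mu> - a)"
    using a by (simp add: add_pos_nonneg)
  then have M: "M > 0" unfolding M_def by simp
  obtain d1 where d1: "d1 > 0" "\<And>l. l \<in> ointerval \<sigma> \<tau> \<Longrightarrow> \<bar>l - l0\<bar> < d1 \<Longrightarrow>
      onorm (\<lambda>x. resolvent (F l) \<i> x - resolvent (F l0) \<i> x) \<le> \<delta> / M"
    using standing_assumptions_resolvent_close[OF SA l0, of "\<delta> / M"] \<delta> M by auto
  obtain r where r: "r > 0" "ball l0 r \<subseteq> U" using U(1,2) open_contains_ball_eq by blast
  show ?thesis
  proof (rule that[of "min d1 r"])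
    show "min d1 r > 0" using d1(1) r(1) by simp
    fix l assume l: "l \<in> ointerval \<sigma> \<tau>" "\<bar>l - l0\<bar> < min d1 r"
    then have lU: "l \<in> U" using r(2) by (auto simp: dist_real_def)
    have "\<bar>qform (semibounded_sa.R (F l) a) x - qform s0.R x\<bar> \<le> \<delta> * (norm x)\<^sup>2" for x
      using qform_R_diff_le[OF sa[OF U(2) a(1)] sa[OF lU a(1)] d1(2)[OF l(1)], of x] l(2) M
      by (simp add: M_def)
    then show "nu_F F l0 \<le> nu_F F l \<and> nu_F F l \<le> nu_F F l0 + multiplicity_ev (F l0) 0"
      using perturb[OF semibounded_sa.compact_pos_op_R[OF sa[OF lU a(1)]]]
      unfolding nu[OF U(2)] nu[OF lU] s0.multiplicity_zero_eq[OF a(2)] by blast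
  qed
qed

section \<open>Counting the jumps\<close>

text \<open>Consider the infimum \<open>c\<close> of the points where \<open>g\<close> exceeds \<open>g a\<close>: the left-hand
  condition at \<open>c\<close> excludes \<open>g c > g a\<close>, the right-hand one that \<open>g\<close> exceeds \<open>g a\<close>
  just after \<open>c\<close>.\<close>
lemma locally_nonincreasing_imp_le:
  fixes g :: "real \<Rightarrow> 'a::linorder"
  assumes ab: "a \<le> b"
    and right: "\<And>x. x \<in> {a..b} \<Longrightarrow> \<exists>d>0. \<forall>l\<in>{a..b}. x < l \<and> l < x + d \<longrightarrow> g l \<le> g x"
    and left: "\<And>x. x \<in> {a..b} \<Longrightarrow> \<exists>d>0. \<forall>l\<in>{a..b}. x - d < l \<and> l < x \<longrightarrow> g x \<le> g l"
  shows "g b \<le> g a"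
proof (rule ccontr)
  define Bad where "Bad = {x\<in>{a..b}. g a < g x}"
  assume "\<not> g b \<le> g a"
  then have "b \<in> Bad" using ab unfolding Bad_def by auto
  then have Bad_ne: "Bad \<noteq> {}" by blast
  have Bad_bdd: "bdd_below Bad" unfolding Bad_def by (rule bdd_belowI[of _ a]) auto
  define c where "c = Inf Bad"
  have c_le: "c \<le> y" if "y \<in> Bad" for y
    unfolding c_def using that Bad_bdd by (rule cInf_lower)
  have c: "c \<in> {a..b}"
    using c_le[OF \<open>b \<in> Bad\<close>] cInf_greatest[OF Bad_ne, of a] unfolding c_def Bad_def by auto
  show False
  proof (cases "c \<in> Bad")
    case True
    then have "a < c" using c unfolding Bad_def by (auto simp: order_le_less)
    obtain d where d: "d > 0" "\<forall>l\<in>{a..b}. c - d < l \<and> l < c \<longrightarrow> g c \<le> g l"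
      using left[OF c] by blast
    define l where "l = max a (c - d / 2)"
    have l: "l \<in> {a..b}" "c - d < l" "l < c"
      using \<open>a < c\<close> c d(1) unfolding l_def by auto
    then have "l \<in> Bad" using d(2) True unfolding Bad_def by force
    then show False using c_le l(3) by fastforce
  next
    case False
    then have "g c \<le> g a" using c unfolding Bad_def by auto
    obtain d where d: "d > 0" "\<forall>l\<in>{a..b}. c < l \<and> l < c + d \<longrightarrow> g l \<le> g c"
      using right[OF c] by blast
    obtain y where y: "y \<in> Bad" "y < c + d"
      using cInf_less_iff[OF Bad_ne Bad_bdd, of "c + d"] d(1) unfolding c_def by auto
    then have "c < y" using c_le[OF y(1)] False by (cases "y = c") auto
    then have "g y \<le> g c" using d(2) y unfolding Bad_def by blast
    then show False using \<open>g c \<le> g a\<close> y(1) unfolding Bad_def by auto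
  qed
qed

lemma finite_Int_lessThan_locally_const:
  fixes E :: "real set"
  assumes "finite E"
  obtains d where "d > 0" "\<And>l. x - d < l \<Longrightarrow> l \<le> x \<Longrightarrow> E \<inter> {..<l} = E \<inter> {..<x}"
proof
  define d where "d = Min (insert 1 ((\<lambda>e. x - e) ` (E \<inter> {..<x})))"
  show "d > 0" unfolding d_def using assms by (subst Min_gr_iff) auto
  have "d \<le> x - e" if "e \<in> E" "e < x" for e
    unfolding d_def using assms that by (intro Min_le) auto
  then show "E \<inter> {..<l} = E \<inter> {..<x}" if "x - d < l" "l \<le> x" for l
    using that by fastforce
qed

lemma sum_Int_lessThan_step:
  fixes m :: "real \<Rightarrow> nat"
  assumes E: "finite E" and "x < l" and m: "x \<notin> E \<Longrightarrow> m x = 0"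
  shows "(\<Sum>e\<in>E \<inter> {..<x}. m e) + m x \<le> (\<Sum>e\<in>E \<inter> {..<l}. m e)"
proof (cases "x \<in> E")
  case True
  then have "(\<Sum>e\<in>E \<inter> {..<x}. m e) + m x = (\<Sum>e\<in>insert x (E \<inter> {..<x}). m e)"
    using E by (simp add: add.commute)
  also have "\<dots> \<le> (\<Sum>e\<in>E \<inter> {..<l}. m e)"
    using E True \<open>x < l\<close> by (intro sum_mono2) auto
  finally show ?thesis .
next
  case False
  then show ?thesis
    using E \<open>x < l\<close> m by (simp, intro sum_mono2) auto
qed

text \<open>The difference of \<open>\<nu>\<close> and the jump count on \<open>[\<xi>1, x)\<close> is nonincreasing.\<close>
lemma jump_count_bound:
  fixes \<nu> m :: "real \<Rightarrow> nat"
  assumes "\<xi>1 < \<xi>2" and E: "finite E" "E \<subseteq> {\<xi>1..<\<xi>2}"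
    and m: "\<And>x. x \<in> {\<xi>1..<\<xi>2} \<Longrightarrow> x \<notin> E \<Longrightarrow> m x = 0"
    and local: "\<And>x. x \<in> {\<xi>1..\<xi>2} \<Longrightarrow>
      \<exists>d>0. \<forall>l\<in>{\<xi>1..\<xi>2}. \<bar>l - x\<bar> < d \<longrightarrow> \<nu> x \<le> \<nu> l \<and> \<nu> l \<le> \<nu> x + m x"
  shows "\<nu> \<xi>2 \<le> (\<Sum>l\<in>E. m l) + \<nu> \<xi>1"
proof -
  define cnt where "cnt x = (\<Sum>l\<in>E \<inter> {..<x}. m l)" for x
  define g where "g x = int (\<nu> x) - int (cnt x)" for x
  have "g \<xi>2 \<le> g \<xi>1"
  proof (rule locally_nonincreasing_imp_le)
    show "\<xi>1 \<le> \<xi>2" using \<open>\<xi>1 < \<xi>2\<close> by simp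
  next
    fix x assume x: "x \<in> {\<xi>1..\<xi>2}"
    obtain d where d: "d > 0" "\<forall>l\<in>{\<xi>1..\<xi>2}. \<bar>l - x\<bar> < d \<longrightarrow> \<nu> l \<le> \<nu> x + m x"
      using local[OF x] by blast
    have "cnt x + m x \<le> cnt l" if "l \<in> {\<xi>1..\<xi>2}" "x < l" for l
      unfolding cnt_def using m x that by (intro sum_Int_lessThan_step E(1)) auto
    then have "g l \<le> g x" if "l \<in> {\<xi>1..\<xi>2}" "x < l" "l < x + d" for l
      using d(2) that unfolding g_def by fastforce
    then show "\<exists>d>0. \<forall>l\<in>{\<xi>1..\<xi>2}. x < l \<and> l < x + d \<longrightarrow> g l \<le> g x"
      using d(1) by blast
  next
    fix x assume x: "x \<in> {\<xi>1..\<xi>2}"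
    obtain d1 where d1: "d1 > 0" "\<forall>l\<in>{\<xi>1..\<xi>2}. \<bar>l - x\<bar> < d1 \<longrightarrow> \<nu> x \<le> \<nu> l"
      using local[OF x] by blast
    obtain d2 where d2: "d2 > 0" "\<And>l. x - d2 < l \<Longrightarrow> l \<le> x \<Longrightarrow> E \<inter> {..<l} = E \<inter> {..<x}"
      using finite_Int_lessThan_locally_const[OF E(1)] by metis
    have "g x \<le> g l" if "l \<in> {\<xi>1..\<xi>2}" "x - min d1 d2 < l" "l < x" for l
      using d1(2) d2(2)[of l] that unfolding g_def cnt_def by fastforce
    then show "\<exists>d>0. \<forall>l\<in>{\<xi>1..\<xi>2}. x - d < l \<and> l < x \<longrightarrow> g x \<le> g l"
      using d1(1) d2(1) by (intro exI[of _ "min d1 d2"]) auto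
  qed
  moreover have "cnt \<xi>1 = 0" "cnt \<xi>2 = (\<Sum>l\<in>E. m l)"
    using E(2) unfolding cnt_def by (auto intro!: sum.neutral sum.cong)
  ultimately show ?thesis unfolding g_def by linarith
qed

theorem theorem1:
  fixes \<sigma> \<tau> :: ereal and F :: "real \<Rightarrow> 'h::chilbert_space op" and \<xi>1 \<xi>2 :: real
  assumes "standing_assumptions \<sigma> \<tau> F"
    and "\<xi>1 < \<xi>2"
    and "{\<xi>1..\<xi>2} \<subseteq> ointerval \<sigma> \<tau>"
  shows "enat (nu_F F \<xi>2) \<le> N_F F \<xi>1 \<xi>2 + enat (nu_F F \<xi>1)"
proof -
  define E where "E = {l\<in>{\<xi>1..<\<xi>2}. ev_F F l}"
  have N: "N_F F \<xi>1 \<xi>2 = (if finite E then enat (\<Sum>l\<in>E. multiplicity_ev (F l) 0) else \<infinity>)"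
    unfolding N_F_def E_def by simp
  show ?thesis
  proof (cases "finite E")
    case True
    have "nu_F F \<xi>2 \<le> (\<Sum>l\<in>E. multiplicity_ev (F l) 0) + nu_F F \<xi>1"
    proof (rule jump_count_bound[OF assms(2) True])
      show "E \<subseteq> {\<xi>1..<\<xi>2}" unfolding E_def by blast
      show "multiplicity_ev (F x) 0 = 0" if "x \<in> {\<xi>1..<\<xi>2}" "x \<notin> E" for x
        using that multiplicity_ev_not_eigenvalue unfolding E_def ev_F_def by blast
      show "\<exists>d>0. \<forall>l\<in>{\<xi>1..\<xi>2}. \<bar>l - x\<bar> < d \<longrightarrow>
          nu_F F x \<le> nu_F F l \<and> nu_F F l \<le> nu_F F x + multiplicity_ev (F x) 0"
        if "x \<in> {\<xi>1..\<xi>2}" for x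
        using nu_F_local_bounds[OF assms(1), of x] that assms(3) by (metis subsetD)
    qed
    then show ?thesis using True N by simp
  qed (simp add: N)
qed

end
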